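(* Let $K=3$, let $\check\Sigma$ be a symmetric positive semidefinite $d_1d_2d_3\times d_1d_2d_3$ matrix, and let $\bar\Sigma_1,\bar\Sigma_2,\bar\Sigma_3$ be produced from $\check\Sigma$ by the hierarchical SVD procedure described in the context. Then: (i) with an appropriate choice of the signs of the leading singular vectors, each $\bar\Sigma_k$ ($k=1,2,3$) is symmetric and positive semidefinite; (ii) suppose $d_1,d_2,d_3$ are fixed, $\Sigma=\Sigma_3\otimes\Sigma_2\otimes\Sigma_1$ with each $\Sigma_k$ a $d_k\times d_k$ symmetric positive definite matrix normalized by $\|\Sigma_1\|_F=\|\Sigma_2\|_F=1$, and $\check\Sigma=\check\Sigma_T$ is a sequence of estimators with $\|\check\Sigma-\Sigma\|_F=o_p(1)$ as $T\to\infty$. Then, with the signs chosen as in (i), $\|\bar\Sigma_k-\Sigma_k\|_F=o_p(1)$ for $k=1,2,3$.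
   Context: $\mathrm{vec}$ stacks columns and $\mathrm{vec}^{-1}$ is its inverse (reshaping a vector of length $m^2$ into an $m\times m$ matrix). Let $\mathcal R_1:\mathbb R^{d_1d_2d_3\times d_1d_2d_3}\to\mathbb R^{d_1^2\times d_2^2d_3^2}$ be the linear rearrangement with $\mathcal R_1(B\otimes A)=\mathrm{vec}(A)\mathrm{vec}(B)'$ for all $A\in\mathbb R^{d_1\times d_1}$, $B\in\mathbb R^{d_2d_3\times d_2d_3}$, and $\mathcal R_2:\mathbb R^{d_2d_3\times d_2d_3}\to\mathbb R^{d_2^2\times d_3^2}$ the linear rearrangement with $\mathcal R_2(C\otimes B)=\mathrm{vec}(B)\mathrm{vec}(C)'$ for $B\in\mathbb R^{d_2\times d_2}$, $C\in\mathbb R^{d_3\times d_3}$. Hierarchical SVD procedure: let $s_1,u_1,v_1$ be the largest singular value and corresponding unit left/right singular vectors of $S_1=\mathcal R_1(\check\Sigma)$; set $\bar\Sigma_1=\mathrm{vec}^{-1}(u_1)$. Let $\sigma_1,a_1,b_1$ be the largest singular value and unit left/right singular vectors of $S_2=\mathcal R_2(\mathrm{vec}^{-1}(s_1v_1))$; set $\bar\Sigma_2=\mathrm{vec}^{-1}(a_1)$ and $\bar\Sigma_3=\mathrm{vec}^{-1}(\sigma_1b_1)$. *)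

theory Defs
  imports "HOL-Probability.Probability"
begin

text \<open>Conventions: all indices are 0-based. A (real) m x n matrix is a function
  nat \<Rightarrow> nat \<Rightarrow> real of which only the entries with row index < m and column
  index < n are relevant; a vector of length n is a function nat \<Rightarrow> real of which
  only the entries with index < n are relevant.\<close>

definition unit_vec :: "nat \<Rightarrow> (nat \<Rightarrow> real) \<Rightarrow> bool" where
  "unit_vec n x \<longleftrightarrow> (\<Sum>i<n. (x i)\<^sup>2) = 1"

definition sing_triple ::
  "nat \<Rightarrow> nat \<Rightarrow> (nat \<Rightarrow> nat \<Rightarrow> real) \<Rightarrow> real \<Rightarrow> (nat \<Rightarrow> real) \<Rightarrow> (nat \<Rightarrow> real) \<Rightarrow> bool" where
  "sing_triple m n S s u v \<longleftrightarrow>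
     0 \<le> s \<and> unit_vec m u \<and> unit_vec n v \<and>
     (\<forall>i<m. (\<Sum>j<n. S i j * v j) = s * u i) \<and>
     (\<forall>j<n. (\<Sum>i<m. S i j * u i) = s * v j)"

definition top_sing_triple ::
  "nat \<Rightarrow> nat \<Rightarrow> (nat \<Rightarrow> nat \<Rightarrow> real) \<Rightarrow> real \<Rightarrow> (nat \<Rightarrow> real) \<Rightarrow> (nat \<Rightarrow> real) \<Rightarrow> bool" where
  "top_sing_triple m n S s u v \<longleftrightarrow>
     sing_triple m n S s u v \<and> (\<forall>s' u' v'. sing_triple m n S s' u' v' \<longrightarrow> s' \<le> s)"

definition vec :: "nat \<Rightarrow> (nat \<Rightarrow> nat \<Rightarrow> real) \<Rightarrow> nat \<Rightarrow> real" where
  "vec m A = (\<lambda>k. A (k mod m) (k div m))"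

definition unvec :: "nat \<Rightarrow> (nat \<Rightarrow> real) \<Rightarrow> nat \<Rightarrow> nat \<Rightarrow> real" where
  "unvec m v = (\<lambda>i j. v (i + m * j))"

text \<open>Kronecker product B \<otimes> A with A of size p x p and B of size q x q.\<close>
definition kron :: "nat \<Rightarrow> (nat \<Rightarrow> nat \<Rightarrow> real) \<Rightarrow> (nat \<Rightarrow> nat \<Rightarrow> real) \<Rightarrow> nat \<Rightarrow> nat \<Rightarrow> real" where
  "kron p B A = (\<lambda>i j. B (i div p) (j div p) * A (i mod p) (j mod p))"

text \<open>The linear rearrangement R: R^{pq x pq} \<rightarrow> R^{p^2 x q^2} with
  R(B \<otimes> A) = vec(A) vec(B)' for A p x p, B q x q (see lemma rearr_kron).\<close>
definition rearr :: "nat \<Rightarrow> nat \<Rightarrow> (nat \<Rightarrow> nat \<Rightarrow> real) \<Rightarrow> nat \<Rightarrow> nat \<Rightarrow> real" where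
  "rearr p q M = (\<lambda>k l. M ((l mod q) * p + k mod p) ((l div q) * p + k div p))"

lemma rearr_kron:
  assumes "0 < p" "0 < q" "k < p^2" "l < q^2"
  shows "rearr p q (kron p B A) k l = vec p A k * vec q B l"
proof -
  have "k div p < p" using assms(3) by (simp add: power2_eq_square less_mult_imp_div_less)
  then show ?thesis using assms by (simp add: rearr_def kron_def vec_def)
qed

text \<open>Hierarchical SVD procedure (K = 3): Sb1, Sb2, Sb3 are a possible output
  for input Sc (different choices of leading singular vectors give different outputs).\<close>
definition hsvd ::
  "nat \<Rightarrow> nat \<Rightarrow> nat \<Rightarrow> (nat \<Rightarrow> nat \<Rightarrow> real) \<Rightarrow>
   (nat \<Rightarrow> nat \<Rightarrow> real) \<Rightarrow> (nat \<Rightarrow> nat \<Rightarrow> real) \<Rightarrow> (nat \<Rightarrow> nat \<Rightarrow> real) \<Rightarrow> bool" where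
  "hsvd d1 d2 d3 Sc Sb1 Sb2 Sb3 \<longleftrightarrow>
     (\<exists>s1 u1 v1 \<sigma>1 a1 b1.
        top_sing_triple (d1^2) ((d2*d3)^2) (rearr d1 (d2*d3) Sc) s1 u1 v1 \<and>
        Sb1 = unvec d1 u1 \<and>
        top_sing_triple (d2^2) (d3^2) (rearr d2 d3 (unvec (d2*d3) (\<lambda>k. s1 * v1 k))) \<sigma>1 a1 b1 \<and>
        Sb2 = unvec d2 a1 \<and>
        Sb3 = unvec d3 (\<lambda>k. \<sigma>1 * b1 k))"

definition symm :: "nat \<Rightarrow> (nat \<Rightarrow> nat \<Rightarrow> real) \<Rightarrow> bool" where
  "symm n A \<longleftrightarrow> (\<forall>i<n. \<forall>j<n. A i j = A j i)"

definition psd :: "nat \<Rightarrow> (nat \<Rightarrow> nat \<Rightarrow> real) \<Rightarrow> bool" where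
  "psd n A \<longleftrightarrow> symm n A \<and> (\<forall>x. 0 \<le> (\<Sum>i<n. \<Sum>j<n. x i * A i j * x j))"

definition pd :: "nat \<Rightarrow> (nat \<Rightarrow> nat \<Rightarrow> real) \<Rightarrow> bool" where
  "pd n A \<longleftrightarrow> symm n A \<and> (\<forall>x. (\<exists>i<n. x i \<noteq> 0) \<longrightarrow> 0 < (\<Sum>i<n. \<Sum>j<n. x i * A i j * x j))"

definition frob :: "nat \<Rightarrow> (nat \<Rightarrow> nat \<Rightarrow> real) \<Rightarrow> real" where
  "frob n A = sqrt (\<Sum>i<n. \<Sum>j<n. (A i j)\<^sup>2)"

definition mdiff :: "(nat \<Rightarrow> nat \<Rightarrow> real) \<Rightarrow> (nat \<Rightarrow> nat \<Rightarrow> real) \<Rightarrow> nat \<Rightarrow> nat \<Rightarrow> real" where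
  "mdiff A B = (\<lambda>i j. A i j - B i j)"

definition o_p1 :: "'a measure \<Rightarrow> (nat \<Rightarrow> 'a \<Rightarrow> real) \<Rightarrow> bool" where
  "o_p1 M X \<longleftrightarrow>
     (\<forall>\<epsilon>>0. ((\<lambda>T. measure M {\<omega> \<in> space M. \<epsilon> < \<bar>X T \<omega>\<bar>}) \<longlongrightarrow> 0) sequentially)"

end

theory Submission
  imports Defs
begin

text \<open>
  (i) For PSD \<open>S\<close>, the bilinear form \<open>vec(A)' R(S) vec(B)\<close> on matrices of unit Frobenius norm
  attains its maximum at PSD \<open>A\<close> and \<open>B\<close>: writing \<open>A\<close> and \<open>B\<close> by their SVDs, every term
  \<open>(x y')\<otimes>(z t')\<close> is dominated, by positive semidefiniteness of \<open>S\<close> on the Kronecker vectors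
  \<open>z\<otimes>x\<close> and \<open>t\<otimes>y\<close>, by the mean of the PSD terms \<open>(x x')\<otimes>(z z')\<close> and \<open>(y y')\<otimes>(t t')\<close>.
  A maximising pair is a leading singular pair, so both stages of the procedure can be run inside the
  PSD cone (the second stage receives \<open>s\<^sub>1 v\<^sub>1\<close> with \<open>s\<^sub>1 \<ge> 0\<close>).

  (ii) If the estimate \<open>S\<close> is \<open>\<delta>\<close>-close to \<open>\<Sigma>\<^sub>3\<otimes>\<Sigma>\<^sub>2\<otimes>\<Sigma>\<^sub>1\<close>, then \<open>R\<^sub>1(S)\<close> is \<open>\<delta>\<close>-close to the
  rank-one matrix \<open>\<alpha>\<beta>'\<close> with \<open>\<alpha> = vec \<Sigma>\<^sub>1\<close> a unit vector and \<open>\<beta> = vec(\<Sigma>\<^sub>3\<otimes>\<Sigma>\<^sub>2)\<close>.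
  Comparing the leading singular value with the value of the form at \<open>(\<alpha>, \<beta>/|\<beta>|)\<close> gives \<open>|\<beta>| (1 - |\<langle>u\<^sub>1,\<alpha>\<rangle>|) \<le> 2\<delta>\<close>, so \<open>u\<^sub>1\<close> is
  \<open>O(\<surd>\<delta>)\<close>-close to \<open>\<plusminus>\<alpha>\<close> and \<open>s\<^sub>1 v\<^sub>1\<close> to \<open>\<beta>\<close>. The sign is \<open>+\<close> because \<open>u\<^sub>1\<close> is the vec of a PSD
  matrix, whose first entry is \<open>\<ge> 0\<close>, whereas \<open>(\<Sigma>\<^sub>1)\<^sub>1\<^sub>1 > 0\<close>. Repeating this for \<open>R\<^sub>2\<close> shows that the
  procedure is continuous at \<open>\<Sigma>\<^sub>3\<otimes>\<Sigma>\<^sub>2\<otimes>\<Sigma>\<^sub>1\<close>, and convergence in probability passes through it.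
\<close>

section \<open>Vectors and bilinear forms\<close>

definition vdot :: "nat \<Rightarrow> (nat \<Rightarrow> real) \<Rightarrow> (nat \<Rightarrow> real) \<Rightarrow> real" where
  "vdot n x y = (\<Sum>i<n. x i * y i)"

definition vnorm2 :: "nat \<Rightarrow> (nat \<Rightarrow> real) \<Rightarrow> real" where
  "vnorm2 n x = (\<Sum>i<n. (x i)\<^sup>2)"

definition bilin :: "nat \<Rightarrow> nat \<Rightarrow> (nat \<Rightarrow> nat \<Rightarrow> real) \<Rightarrow> (nat \<Rightarrow> real) \<Rightarrow> (nat \<Rightarrow> real) \<Rightarrow> real" where
  "bilin m n R x y = (\<Sum>i<m. \<Sum>j<n. x i * R i j * y j)"

definition frob2 :: "nat \<Rightarrow> nat \<Rightarrow> (nat \<Rightarrow> nat \<Rightarrow> real) \<Rightarrow> real" where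
  "frob2 m n R = (\<Sum>i<m. \<Sum>j<n. (R i j)\<^sup>2)"

lemma unit_vec_iff_vnorm2: "unit_vec n x \<longleftrightarrow> vnorm2 n x = 1"
  unfolding unit_vec_def vnorm2_def ..

lemma frob_eq_sqrt_frob2: "frob n A = sqrt (frob2 n n A)"
  unfolding frob_def frob2_def ..

lemma vnorm2_nonneg: "0 \<le> vnorm2 n x"
  unfolding vnorm2_def by (simp add: sum_nonneg)

lemma frob2_nonneg: "0 \<le> frob2 m n R"
  unfolding frob2_def by (simp add: sum_nonneg)

lemma vnorm2_eq_0_iff: "vnorm2 n x = 0 \<longleftrightarrow> (\<forall>i<n. x i = 0)"
  unfolding vnorm2_def by (auto simp: sum_nonneg_eq_0_iff)

lemma vnorm2_eq_vdot: "vnorm2 n x = vdot n x x"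
  unfolding vnorm2_def vdot_def by (simp add: power2_eq_square)

lemma vdot_commute: "vdot n x y = vdot n y x"
  unfolding vdot_def by (simp add: mult.commute)

lemma vdot_square_le: "(vdot n x y)\<^sup>2 \<le> vnorm2 n x * vnorm2 n y"
  unfolding vdot_def vnorm2_def by (rule Cauchy_Schwarz_ineq_sum)

lemma abs_vdot_le:
  assumes "vnorm2 n x = 1" "vnorm2 n y = c\<^sup>2" "0 \<le> c"
  shows "\<bar>vdot n x y\<bar> \<le> c"
  using vdot_square_le[of n x y] assms power2_le_imp_le[of "\<bar>vdot n x y\<bar>" c] by simp

lemma vnorm2_component_le: "i < n \<Longrightarrow> (x i)\<^sup>2 \<le> vnorm2 n x"
  unfolding vnorm2_def by (rule member_le_sum) auto

lemma vnorm2_diff: "vnorm2 n (\<lambda>i. x i - y i) = vnorm2 n x - 2 * vdot n x y + vnorm2 n y"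
  unfolding vnorm2_def vdot_def
  by (simp add: power2_diff sum.distrib sum_subtractf sum_distrib_left algebra_simps)

lemma vnorm2_add: "vnorm2 n (\<lambda>i. x i + y i) = vnorm2 n x + 2 * vdot n x y + vnorm2 n y"
  unfolding vnorm2_def vdot_def
  by (simp add: power2_sum sum.distrib sum_distrib_left algebra_simps)

lemma vnorm2_add_le: "vnorm2 n (\<lambda>i. x i + y i) \<le> 2 * vnorm2 n x + 2 * vnorm2 n y"
proof -
  have "(x i + y i)\<^sup>2 \<le> 2 * (x i)\<^sup>2 + 2 * (y i)\<^sup>2" for i
    using sum_squares_ge_zero[of "x i - y i" 0] by (simp add: power2_eq_square algebra_simps)
  hence "vnorm2 n (\<lambda>i. x i + y i) \<le> (\<Sum>i<n. 2 * (x i)\<^sup>2 + 2 * (y i)\<^sup>2)"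
    unfolding vnorm2_def by (intro sum_mono) auto
  thus ?thesis unfolding vnorm2_def by (simp add: sum.distrib sum_distrib_left)
qed

lemma vnorm2_scale: "vnorm2 n (\<lambda>i. c * x i) = c\<^sup>2 * vnorm2 n x"
  unfolding vnorm2_def by (simp add: power_mult_distrib sum_distrib_left)

lemma vdot_scale_right: "vdot n x (\<lambda>i. c * y i) = c * vdot n x y"
  unfolding vdot_def by (simp add: sum_distrib_left mult_ac)

lemma bilin_eq_vdot: "bilin m n R x y = vdot m x (\<lambda>i. \<Sum>j<n. R i j * y j)"
  unfolding bilin_def vdot_def by (simp add: sum_distrib_left mult.assoc)

lemma bilin_transpose: "bilin m n R x y = bilin n m (\<lambda>j i. R i j) y x"
  unfolding bilin_def by (subst sum.swap) (simp add: mult_ac)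

lemma bilin_neg_left: "bilin m n R (\<lambda>i. - x i) y = - bilin m n R x y"
  unfolding bilin_def by (simp add: sum_negf)

lemma bilin_square_le: "(bilin m n R x y)\<^sup>2 \<le> frob2 m n R * vnorm2 m x * vnorm2 n y"
proof -
  have "(bilin m n R x y)\<^sup>2 = (\<Sum>i<m. x i * (\<Sum>j<n. R i j * y j))\<^sup>2"
    unfolding bilin_def by (simp add: sum_distrib_left mult.assoc)
  also have "\<dots> \<le> vnorm2 m x * (\<Sum>i<m. (\<Sum>j<n. R i j * y j)\<^sup>2)"
    using Cauchy_Schwarz_ineq_sum[of x _ "{..<m}"] unfolding vnorm2_def by simp
  also have "\<dots> \<le> vnorm2 m x * (\<Sum>i<m. (\<Sum>j<n. (R i j)\<^sup>2) * vnorm2 n y)"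
    unfolding vnorm2_def
    by (intro mult_left_mono sum_mono Cauchy_Schwarz_ineq_sum) (simp add: sum_nonneg)
  also have "\<dots> = frob2 m n R * vnorm2 m x * vnorm2 n y"
    unfolding frob2_def by (simp add: sum_distrib_right sum_distrib_left mult_ac)
  finally show ?thesis .
qed

lemma abs_bilin_le:
  assumes "frob2 m n R \<le> \<delta>\<^sup>2" "0 \<le> \<delta>" "vnorm2 m x = 1" "vnorm2 n y = 1"
  shows "\<bar>bilin m n R x y\<bar> \<le> \<delta>"
  using bilin_square_le[of m n R x y] assms power2_le_imp_le[of "\<bar>bilin m n R x y\<bar>" \<delta>] by simp

lemma vnorm2_transpose_apply_le: "vnorm2 n (\<lambda>j. \<Sum>i<m. R i j * x i) \<le> frob2 m n R * vnorm2 m x"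
proof -
  have "vnorm2 n (\<lambda>j. \<Sum>i<m. R i j * x i) \<le> (\<Sum>j<n. (\<Sum>i<m. (R i j)\<^sup>2) * vnorm2 m x)"
    unfolding vnorm2_def by (intro sum_mono) (rule Cauchy_Schwarz_ineq_sum)
  also have "\<dots> = frob2 m n R * vnorm2 m x"
    unfolding frob2_def by (subst sum.swap) (simp add: sum_distrib_right)
  finally show ?thesis .
qed

lemma bilin_split_rank_one:
  "bilin m n R x y = bilin m n (\<lambda>i j. R i j - \<alpha> i * \<beta> j) x y + vdot m x \<alpha> * vdot n \<beta> y"
proof -
  have "bilin m n (\<lambda>i j. \<alpha> i * \<beta> j) x y = vdot m x \<alpha> * vdot n \<beta> y"
    unfolding bilin_def vdot_def by (simp add: sum_product mult_ac)
  moreover have "bilin m n R x y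
      = bilin m n (\<lambda>i j. R i j - \<alpha> i * \<beta> j) x y + bilin m n (\<lambda>i j. \<alpha> i * \<beta> j) x y"
    unfolding bilin_def by (simp add: algebra_simps sum_subtractf sum.distrib)
  ultimately show ?thesis by simp
qed

section \<open>Leading singular triples\<close>

text \<open>Vectors are total functions \<^typ>\<open>nat \<Rightarrow> real\<close>; to get a compact sphere we fix the
  irrelevant entries to 0 and pass between the two views by \<open>trunc_vec\<close>.\<close>

definition unit_sphere :: "nat \<Rightarrow> (nat \<Rightarrow> real) set" where
  "unit_sphere n = {x. (\<forall>i. n \<le> i \<longrightarrow> x i = 0) \<and> vnorm2 n x = 1}"

definition trunc_vec :: "nat \<Rightarrow> (nat \<Rightarrow> real) \<Rightarrow> nat \<Rightarrow> real" where
  "trunc_vec n x = (\<lambda>i. if i < n then x i else 0)"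

lemma vnorm2_trunc_vec [simp]: "vnorm2 n (trunc_vec n x) = vnorm2 n x"
  unfolding vnorm2_def trunc_vec_def by simp

lemma bilin_trunc_vec [simp]: "bilin m n R (trunc_vec m x) (trunc_vec n y) = bilin m n R x y"
  unfolding bilin_def trunc_vec_def by simp

lemma trunc_vec_in_unit_sphere: "vnorm2 n x = 1 \<Longrightarrow> trunc_vec n x \<in> unit_sphere n"
  unfolding unit_sphere_def mem_Collect_eq vnorm2_trunc_vec by (simp add: trunc_vec_def)

lemma unit_sphere_vnorm2: "x \<in> unit_sphere n \<Longrightarrow> vnorm2 n x = 1"
  unfolding unit_sphere_def by simp

lemma vnorm2_basis_vec: "i < n \<Longrightarrow> vnorm2 n (\<lambda>j. if j = i then 1 else 0) = 1"
proof -
  assume "i < n"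
  have "(\<Sum>j<n. (if j = i then 1 else 0 :: real)\<^sup>2) = (\<Sum>j<n. if j = i then 1 else 0)"
    by (rule sum.cong) auto
  thus ?thesis unfolding vnorm2_def using \<open>i < n\<close> by simp
qed

lemma first_basis_vec_in_unit_sphere: "0 < n \<Longrightarrow> (\<lambda>i. if i = 0 then 1 else 0) \<in> unit_sphere n"
  unfolding unit_sphere_def using vnorm2_basis_vec[of 0 n] by simp

lemma continuous_on_component: "continuous_on S (\<lambda>x::nat \<Rightarrow> real. x i)"
  by (rule continuous_on_subset[OF continuous_on_product_coordinates]) auto

lemma compact_unit_sphere: "compact (unit_sphere n)"
proof -
  define box where "box = PiE UNIV (\<lambda>i::nat. if i < n then {-1..1::real} else {0})"
  have "compactin (product_topology (\<lambda>i. euclidean) UNIV) box"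
    unfolding box_def by (subst compactin_PiE) auto
  hence "compact box" by (simp add: euclidean_product_topology)
  have "closed {x::nat \<Rightarrow> real. n \<le> i \<longrightarrow> x i = 0}" for i
    by (cases "n \<le> i") (auto intro!: closed_Collect_eq continuous_on_component continuous_intros)
  moreover have "closed {x::nat \<Rightarrow> real. vnorm2 n x = 1}"
    unfolding vnorm2_def by (auto intro!: closed_Collect_eq continuous_on_component continuous_intros)
  ultimately have "closed (unit_sphere n)"
    unfolding unit_sphere_def by (intro closed_Collect_conj closed_Collect_all) auto
  moreover have "unit_sphere n \<subseteq> box"
  proof
    fix x assume x: "x \<in> unit_sphere n"
    have "\<bar>x i\<bar> \<le> 1" if "i < n" for i
      using vnorm2_component_le[OF that, of x] unit_sphere_vnorm2[OF x] by (simp add: abs_square_le_1)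
    thus "x \<in> box" using x unfolding box_def unit_sphere_def by (auto simp: abs_le_iff)
  qed
  ultimately show ?thesis using compact_Int_closed[OF \<open>compact box\<close>] by (metis inf.absorb_iff2)
qed

lemma continuous_on_bilin:
  "continuous_on S (\<lambda>z::(nat \<Rightarrow> real) \<times> (nat \<Rightarrow> real). bilin m n R (fst z) (snd z))"
proof -
  have "continuous_on S (\<lambda>z::(nat \<Rightarrow> real) \<times> (nat \<Rightarrow> real). fst z i)" for i
    using continuous_on_compose2[OF continuous_on_component[of UNIV i]
        continuous_on_fst[OF continuous_on_id]]
    by auto
  moreover have "continuous_on S (\<lambda>z::(nat \<Rightarrow> real) \<times> (nat \<Rightarrow> real). snd z i)" for i
    using continuous_on_compose2[OF continuous_on_component[of UNIV i]
        continuous_on_snd[OF continuous_on_id]]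
    by auto
  ultimately show ?thesis unfolding bilin_def by (intro continuous_intros)
qed

lemma bilin_attains_max:
  assumes "compact K1" "compact K2" "K1 \<noteq> {}" "K2 \<noteq> {}"
  shows "\<exists>u\<in>K1. \<exists>v\<in>K2. \<forall>x\<in>K1. \<forall>y\<in>K2. bilin m n R x y \<le> bilin m n R u v"
proof -
  obtain z where "z \<in> K1 \<times> K2" "\<forall>y\<in>K1 \<times> K2. bilin m n R (fst y) (snd y) \<le> bilin m n R (fst z) (snd z)"
    using continuous_attains_sup[OF compact_Times[OF assms(1,2)] _ continuous_on_bilin] assms(3,4)
    by blast
  thus ?thesis by (metis mem_Times_iff fst_conv snd_conv)
qed

lemma vdot_max_imp_parallel:
  assumes u: "vnorm2 m u = 1" and max: "\<And>x. vnorm2 m x = 1 \<Longrightarrow> vdot m x w \<le> vdot m u w"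
  shows "\<forall>i<m. w i = vdot m u w * u i"
proof -
  define s where "s = vdot m u w"
  have "vnorm2 m (\<lambda>i. w i - s * u i) = vnorm2 m w - s\<^sup>2"
    unfolding vnorm2_diff vnorm2_scale vdot_scale_right u
    by (simp add: s_def vdot_commute power2_eq_square)
  also have "\<dots> = 0"
  proof (cases "vnorm2 m w = 0")
    case True
    hence "s = 0" unfolding s_def vdot_def by (simp add: vnorm2_eq_0_iff)
    with True show ?thesis by simp
  next
    case False
    define N where "N = sqrt (vnorm2 m w)"
    have N: "0 < N" "N\<^sup>2 = vnorm2 m w"
      using False vnorm2_nonneg[of m w] unfolding N_def by auto
    have ww: "(\<Sum>i<m. w i * w i) = N * N" using N(2) unfolding vnorm2_def by (simp add: power2_eq_square)
    have "vnorm2 m (\<lambda>i. w i / N) = 1" and "vdot m (\<lambda>i. w i / N) w = N"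
      using N(1) unfolding vnorm2_def vdot_def
      by (simp_all add: power_divide sum_divide_distrib[symmetric] power2_eq_square ww)
    hence "N \<le> s" using max[of "\<lambda>i. w i / N"] unfolding s_def by simp
    hence "N\<^sup>2 \<le> s\<^sup>2" using N by (intro power_mono) auto
    moreover have "s\<^sup>2 \<le> N\<^sup>2" using vdot_square_le[of m u w] u N unfolding s_def by simp
    ultimately show ?thesis using N by simp
  qed
  finally show ?thesis unfolding vnorm2_eq_0_iff s_def by simp
qed

lemma bilin_max_imp_sing_triple:
  assumes u: "vnorm2 m u = 1" and v: "vnorm2 n v = 1"
    and max: "\<And>x y. vnorm2 m x = 1 \<Longrightarrow> vnorm2 n y = 1 \<Longrightarrow> bilin m n R x y \<le> bilin m n R u v"
  shows "sing_triple m n R (bilin m n R u v) u v"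
proof -
  define Rt where "Rt = (\<lambda>j i. R i j)"
  have t: "bilin m n R x y = bilin n m Rt y x" for x y unfolding Rt_def by (rule bilin_transpose)
  have "\<forall>i<m. (\<Sum>j<n. R i j * v j) = vdot m u (\<lambda>i. \<Sum>j<n. R i j * v j) * u i"
    by (rule vdot_max_imp_parallel[OF u]) (use max[OF _ v] in \<open>simp only: bilin_eq_vdot\<close>)
  moreover have "\<forall>j<n. (\<Sum>i<m. Rt j i * u i) = vdot n v (\<lambda>j. \<Sum>i<m. Rt j i * u i) * v j"
    by (rule vdot_max_imp_parallel[OF v]) (use max[OF u, unfolded t] in \<open>simp only: bilin_eq_vdot\<close>)
  moreover have "0 \<le> bilin m n R u v"
    using max[of "\<lambda>i. - u i" v] u v by (simp add: bilin_neg_left vnorm2_def)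
  ultimately show ?thesis
    unfolding sing_triple_def unit_vec_iff_vnorm2 using u v
    by (simp add: bilin_eq_vdot[symmetric] t[of u v, symmetric]) (simp add: Rt_def)
qed

lemma sing_triple_value:
  assumes "sing_triple m n R s u v"
  shows "s = bilin m n R u v"
proof -
  have "bilin m n R u v = vdot m u (\<lambda>i. s * u i)"
    using assms unfolding sing_triple_def bilin_eq_vdot vdot_def by simp
  also have "\<dots> = s" using assms unfolding sing_triple_def unit_vec_iff_vnorm2
    by (simp add: vdot_scale_right vnorm2_eq_vdot)
  finally show ?thesis ..
qed

lemma sing_triple_ex_max:
  assumes "0 < m" "0 < n"
  shows "\<exists>s u v. sing_triple m n R s u v \<and>
    (\<forall>x y. vnorm2 m x = 1 \<longrightarrow> vnorm2 n y = 1 \<longrightarrow> bilin m n R x y \<le> s)"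
proof -
  obtain u v where u: "u \<in> unit_sphere m" and v: "v \<in> unit_sphere n"
    and max: "\<forall>x\<in>unit_sphere m. \<forall>y\<in>unit_sphere n. bilin m n R x y \<le> bilin m n R u v"
    using bilin_attains_max[OF compact_unit_sphere compact_unit_sphere, of m n m n R]
      first_basis_vec_in_unit_sphere[OF assms(1)] first_basis_vec_in_unit_sphere[OF assms(2)]
    by blast
  have max': "bilin m n R x y \<le> bilin m n R u v" if "vnorm2 m x = 1" "vnorm2 n y = 1" for x y
    using max trunc_vec_in_unit_sphere[OF that(1)] trunc_vec_in_unit_sphere[OF that(2)]
    by (metis bilin_trunc_vec)
  show ?thesis
    using bilin_max_imp_sing_triple[OF unit_sphere_vnorm2[OF u] unit_sphere_vnorm2[OF v] max'] max'
    by blast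
qed

lemma top_sing_triple_ge_bilin:
  assumes "top_sing_triple m n R s u v" "0 < m" "0 < n" "vnorm2 m x = 1" "vnorm2 n y = 1"
  shows "bilin m n R x y \<le> s"
proof -
  obtain s' u' v' where "sing_triple m n R s' u' v'" "bilin m n R x y \<le> s'"
    using sing_triple_ex_max[OF assms(2,3), of R] assms(4,5) by blast
  thus ?thesis using assms(1) unfolding top_sing_triple_def by force
qed

lemma bilin_max_imp_top_sing_triple:
  assumes "vnorm2 m u = 1" "vnorm2 n v = 1"
    and "\<And>x y. vnorm2 m x = 1 \<Longrightarrow> vnorm2 n y = 1 \<Longrightarrow> bilin m n R x y \<le> bilin m n R u v"
  shows "top_sing_triple m n R (bilin m n R u v) u v"
  unfolding top_sing_triple_def
proof (intro conjI allI impI)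
  show "sing_triple m n R (bilin m n R u v) u v" by (rule bilin_max_imp_sing_triple[OF assms])
  fix s' u' v' assume st: "sing_triple m n R s' u' v'"
  hence "vnorm2 m u' = 1" "vnorm2 n v' = 1" unfolding sing_triple_def unit_vec_iff_vnorm2 by auto
  thus "s' \<le> bilin m n R u v" unfolding sing_triple_value[OF st] by (rule assms(3))
qed

section \<open>Singular value decomposition\<close>

definition orthonormal_sys :: "nat \<Rightarrow> (nat \<Rightarrow> nat \<Rightarrow> real) \<Rightarrow> nat \<Rightarrow> bool" where
  "orthonormal_sys n X r \<longleftrightarrow> (\<forall>a<r. \<forall>b<r. vdot n (X a) (X b) = (if a = b then 1 else 0))"

lemma orthonormal_sys_double_sum:
  assumes "orthonormal_sys n X r"
  shows "(\<Sum>a<r. \<Sum>b<r. c a * d b * vdot n (X a) (X b)) = (\<Sum>a<r. c a * d a)"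
proof -
  have "(\<Sum>a<r. \<Sum>b<r. c a * d b * vdot n (X a) (X b)) = (\<Sum>a<r. \<Sum>b<r. if a = b then c a * d b else 0)"
    using assms unfolding orthonormal_sys_def by (intro sum.cong refl) auto
  thus ?thesis by simp
qed

lemma vnorm2_lin_comb:
  "vnorm2 n (\<lambda>j. \<Sum>a<r. c a * X a j) = (\<Sum>a<r. \<Sum>b<r. c a * c b * vdot n (X a) (X b))"
proof -
  have "vnorm2 n (\<lambda>j. \<Sum>a<r. c a * X a j) = (\<Sum>j<n. \<Sum>a<r. \<Sum>b<r. c a * c b * (X a j * X b j))"
    unfolding vnorm2_def by (simp add: power2_eq_square sum_product mult_ac)
  also have "\<dots> = (\<Sum>a<r. \<Sum>j<n. \<Sum>b<r. c a * c b * (X a j * X b j))" by (rule sum.swap)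
  also have "\<dots> = (\<Sum>a<r. \<Sum>b<r. \<Sum>j<n. c a * c b * (X a j * X b j))"
    by (rule sum.cong[OF refl], rule sum.swap)
  finally show ?thesis unfolding vdot_def by (simp add: sum_distrib_left)
qed

lemma vnorm2_diff_lin_comb:
  "vnorm2 n (\<lambda>j. z j - (\<Sum>a<r. c a * X a j)) =
     vnorm2 n z - 2 * (\<Sum>a<r. c a * vdot n (X a) z) + (\<Sum>a<r. \<Sum>b<r. c a * c b * vdot n (X a) (X b))"
proof -
  have "vdot n z (\<lambda>j. \<Sum>a<r. c a * X a j) = (\<Sum>a<r. c a * vdot n (X a) z)"
    unfolding vdot_def by (simp add: sum_distrib_left mult_ac) (rule sum.swap)
  thus ?thesis unfolding vnorm2_diff vnorm2_lin_comb by simp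
qed

text \<open>Bessel's inequality for the standard basis vectors gives \<open>\<Sum>\<^sub>a (X a i)\<^sup>2 \<le> 1\<close> for every \<open>i < n\<close>;
  summing over \<open>i\<close> yields \<open>r \<le> n\<close>.\<close>

lemma orthonormal_sys_le_dim:
  assumes "orthonormal_sys n X r"
  shows "r \<le> n"
proof -
  have "(\<Sum>a<r. (X a i)\<^sup>2) \<le> 1" if i: "i < n" for i
  proof -
    define e where "e = (\<lambda>j. if j = i then 1 else (0::real))"
    have "vdot n (X a) e = X a i" for a unfolding vdot_def e_def using i
      by (simp add: if_distrib cong: if_cong)
    moreover have "vnorm2 n e = 1" unfolding e_def using i by (rule vnorm2_basis_vec)
    moreover have "0 \<le> vnorm2 n (\<lambda>j. e j - (\<Sum>a<r. X a i * X a j))" by (rule vnorm2_nonneg)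
    ultimately show ?thesis
      unfolding vnorm2_diff_lin_comb orthonormal_sys_double_sum[OF assms] by (simp add: power2_eq_square)
  qed
  hence "(\<Sum>i<n. \<Sum>a<r. (X a i)\<^sup>2) \<le> (\<Sum>i<n. 1)" by (intro sum_mono) simp
  moreover have "(\<Sum>i<n. \<Sum>a<r. (X a i)\<^sup>2) = (\<Sum>a<r. vnorm2 n (X a))"
    unfolding vnorm2_def by (rule sum.swap)
  moreover have "(\<Sum>a<r. vnorm2 n (X a)) = r"
    using assms unfolding orthonormal_sys_def vnorm2_eq_vdot by simp
  ultimately show ?thesis by simp
qed

lemma bilin_basis_vec:
  assumes "i0 < m" "j0 < n"
  shows "bilin m n R (\<lambda>i. if i = i0 then 1 else 0) (\<lambda>j. if j = j0 then 1 else 0) = R i0 j0"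
  unfolding bilin_def using assms
  by (simp add: if_distrib[of "\<lambda>x. x * _"] if_distrib[of "\<lambda>x. _ * x"] cong: if_cong)

lemma orthonormal_sys_extend:
  assumes "orthonormal_sys n X k" "vnorm2 n u = 1" "\<forall>a<k. vdot n (X a) u = 0"
  shows "orthonormal_sys n (X(k := u)) (Suc k)"
  unfolding orthonormal_sys_def
proof (intro allI impI)
  fix a b assume "a < Suc k" "b < Suc k"
  thus "vdot n ((X(k := u)) a) ((X(k := u)) b) = (if a = b then 1 else 0)"
    using assms vdot_commute[of n u "X b"] unfolding orthonormal_sys_def vnorm2_eq_vdot
    by (cases "a = k"; cases "b = k") (auto simp: less_Suc_eq)
qed

text \<open>One step of the greedy construction of an SVD: a leading singular pair of a nonzero residual
  that annihilates the singular vectors found so far is orthogonal to them.\<close>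

lemma svd_deflation_step:
  assumes n: "0 < n" and X: "orthonormal_sys n X k" and Y: "orthonormal_sys n Y k"
    and nz: "i0 < n" "j0 < n" "B i0 j0 \<noteq> 0"
    and BY: "\<forall>a<k. \<forall>i<n. (\<Sum>j<n. B i j * Y a j) = 0"
    and BX: "\<forall>a<k. \<forall>j<n. (\<Sum>i<n. B i j * X a i) = 0"
  shows "\<exists>s u v. 0 < s \<and> sing_triple n n B s u v \<and>
           orthonormal_sys n (X(k := u)) (Suc k) \<and> orthonormal_sys n (Y(k := v)) (Suc k)"
proof -
  obtain s u v where st: "sing_triple n n B s u v"
    and max: "\<forall>x y. vnorm2 n x = 1 \<longrightarrow> vnorm2 n y = 1 \<longrightarrow> bilin n n B x y \<le> s"
    using sing_triple_ex_max[OF n n] by blast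
  have u: "vnorm2 n u = 1" and v: "vnorm2 n v = 1"
    and Bv: "\<forall>i<n. (\<Sum>j<n. B i j * v j) = s * u i" and Bu: "\<forall>j<n. (\<Sum>i<n. B i j * u i) = s * v j"
    using st unfolding sing_triple_def unit_vec_iff_vnorm2 by auto
  have e: "vnorm2 n (\<lambda>i. if i = i0 then 1 else 0) = 1" "vnorm2 n (\<lambda>i. - (if i = i0 then 1 else 0)) = 1"
    "vnorm2 n (\<lambda>j. if j = j0 then 1 else 0) = 1"
    using vnorm2_basis_vec[OF nz(1)] vnorm2_basis_vec[OF nz(2)] by (simp_all add: vnorm2_def)
  have "B i0 j0 \<le> s"
    using max[rule_format, OF e(1) e(3)] unfolding bilin_basis_vec[OF nz(1,2)] .
  moreover have "- B i0 j0 \<le> s"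
    using max[rule_format, OF e(2) e(3)] unfolding bilin_neg_left bilin_basis_vec[OF nz(1,2)] .
  ultimately have s: "0 < s" using nz(3) by linarith
  have "s * vdot n (X a) u = 0" if "a < k" for a
  proof -
    have "s * vdot n (X a) u = vdot n (X a) (\<lambda>i. \<Sum>j<n. B i j * v j)"
      using Bv unfolding vdot_def by (simp add: sum_distrib_left mult_ac)
    also have "\<dots> = vdot n v (\<lambda>j. \<Sum>i<n. B i j * X a i)"
      using bilin_transpose[of n n B "X a" v] by (simp add: bilin_eq_vdot)
    also have "\<dots> = 0" using BX that unfolding vdot_def by simp
    finally show ?thesis .
  qed
  moreover have "s * vdot n (Y a) v = 0" if "a < k" for a
  proof -
    have "s * vdot n (Y a) v = vdot n (Y a) (\<lambda>j. \<Sum>i<n. B i j * u i)"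
      using Bu unfolding vdot_def by (simp add: sum_distrib_left mult_ac)
    also have "\<dots> = vdot n u (\<lambda>i. \<Sum>j<n. B i j * Y a j)"
      using bilin_transpose[of n n B u "Y a"] by (simp add: bilin_eq_vdot)
    also have "\<dots> = 0" using BY that unfolding vdot_def by simp
    finally show ?thesis .
  qed
  ultimately show ?thesis
    using s st orthonormal_sys_extend[OF X u] orthonormal_sys_extend[OF Y v] by auto
qed

lemma deflation_annihilates:
  assumes Bv: "\<forall>i<n. (\<Sum>j<n. B i j * v j) = s * u i" and v: "vnorm2 n v = 1"
    and Y': "orthonormal_sys n (Y(k := v)) (Suc k)" and BY: "\<forall>a<k. \<forall>i<n. (\<Sum>j<n. B i j * Y a j) = 0"
  shows "\<forall>a<Suc k. \<forall>i<n. (\<Sum>j<n. (B i j - s * u i * v j) * (Y(k := v)) a j) = 0"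
proof (intro allI impI)
  fix a i assume a: "a < Suc k" and i: "i < n"
  have "(\<Sum>j<n. (B i j - s * u i * v j) * w j) = (\<Sum>j<n. B i j * w j) - s * u i * vdot n v w" for w
    unfolding vdot_def
    by (simp add: left_diff_distrib right_diff_distrib sum_subtractf sum_distrib_left mult_ac)
  hence "(\<Sum>j<n. (B i j - s * u i * v j) * (Y(k := v)) a j)
      = (\<Sum>j<n. B i j * (Y(k := v)) a j) - s * u i * vdot n v ((Y(k := v)) a)" .
  also have "\<dots> = 0"
  proof (cases "a = k")
    case False
    hence "a < k" using a by simp
    moreover have "vdot n ((Y(k := v)) k) ((Y(k := v)) a) = 0"
      using Y'[unfolded orthonormal_sys_def, rule_format, of k a] \<open>a < k\<close> by simp
    ultimately show ?thesis using BY i False by simp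
  qed (use Bv i v in \<open>simp add: vnorm2_eq_vdot\<close>)
  finally show "(\<Sum>j<n. (B i j - s * u i * v j) * (Y(k := v)) a j) = 0" .
qed

lemma svd_complete_partial:
  assumes n: "0 < n" and X: "orthonormal_sys n X k" and Y: "orthonormal_sys n Y k"
    and \<sigma>: "\<forall>a<k. 0 \<le> \<sigma> a"
    and RY: "\<forall>a<k. \<forall>i<n. (\<Sum>j<n. (A i j - (\<Sum>b<k. \<sigma> b * X b i * Y b j)) * Y a j) = 0"
    and RX: "\<forall>a<k. \<forall>j<n. (\<Sum>i<n. (A i j - (\<Sum>b<k. \<sigma> b * X b i * Y b j)) * X a i) = 0"
  shows "\<exists>r \<sigma> X Y. (\<forall>a<r. 0 \<le> \<sigma> a) \<and> orthonormal_sys n X r \<and> orthonormal_sys n Y r \<and>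
           (\<forall>i<n. \<forall>j<n. A i j = (\<Sum>a<r. \<sigma> a * X a i * Y a j))"
  using X Y \<sigma> RY RX
proof (induction "n - k" arbitrary: k X Y \<sigma> rule: less_induct)
  case less
  define B where "B = (\<lambda>i j. A i j - (\<Sum>b<k. \<sigma> b * X b i * Y b j))"
  show ?case
  proof (cases "\<forall>i<n. \<forall>j<n. B i j = 0")
    case True
    thus ?thesis using less.prems unfolding B_def by auto
  next
    case False
    then obtain i0 j0 where nz: "i0 < n" "j0 < n" "B i0 j0 \<noteq> 0" by blast
    obtain s u v where s: "0 < s" and st: "sing_triple n n B s u v"
      and X': "orthonormal_sys n (X(k := u)) (Suc k)" and Y': "orthonormal_sys n (Y(k := v)) (Suc k)"
      using svd_deflation_step[of n X k Y i0 j0 B] n less.prems(1,2,4,5) nz unfolding B_def by blast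
    have Bv: "\<forall>i<n. (\<Sum>j<n. B i j * v j) = s * u i" and Bu: "\<forall>j<n. (\<Sum>i<n. B i j * u i) = s * v j"
      and u: "vnorm2 n u = 1" and v: "vnorm2 n v = 1"
      using st unfolding sing_triple_def unit_vec_iff_vnorm2 by auto
    let ?\<sigma>' = "\<sigma>(k := s)" and ?X' = "X(k := u)" and ?Y' = "Y(k := v)"
    have res: "A i j - (\<Sum>b<Suc k. ?\<sigma>' b * ?X' b i * ?Y' b j) = B i j - s * u i * v j" for i j
      unfolding B_def by simp
    have RY': "\<forall>a<Suc k. \<forall>i<n. (\<Sum>j<n. (A i j - (\<Sum>b<Suc k. ?\<sigma>' b * ?X' b i * ?Y' b j)) * ?Y' a j) = 0"
      unfolding res using deflation_annihilates[OF Bv v Y'] less.prems(4) unfolding B_def by blast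
    have "\<forall>a<Suc k. \<forall>j<n. (\<Sum>i<n. (B i j - s * v j * u i) * ?X' a i) = 0"
      using deflation_annihilates[where B="\<lambda>j i. B i j", OF Bu u X'] less.prems(5) unfolding B_def by blast
    hence RX': "\<forall>a<Suc k. \<forall>j<n. (\<Sum>i<n. (A i j - (\<Sum>b<Suc k. ?\<sigma>' b * ?X' b i * ?Y' b j)) * ?X' a i) = 0"
      unfolding res by (simp add: mult_ac)
    have \<sigma>': "\<forall>a<Suc k. 0 \<le> ?\<sigma>' a" using less.prems(3) s by (auto simp: less_Suc_eq)
    have "n - Suc k < n - k" using orthonormal_sys_le_dim[OF X'] by simp
    from less.hyps[OF this X' Y' \<sigma>' RY' RX'] show ?thesis .
  qed
qed

lemma svd_exists:
  assumes "0 < n"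
  shows "\<exists>r \<sigma> X Y. (\<forall>a<r. 0 \<le> \<sigma> a) \<and> orthonormal_sys n X r \<and> orthonormal_sys n Y r \<and>
           (\<forall>i<n. \<forall>j<n. A i j = (\<Sum>a<r. \<sigma> a * X a i * Y a j))"
  by (rule svd_complete_partial[OF assms, of _ 0]) (auto simp: orthonormal_sys_def)

section \<open>The rearrangement and PSD maximisers\<close>

lemma sum_lessThan_mult_split: "(\<Sum>k<(p::nat) * m. h k) = (\<Sum>j<m. \<Sum>i<p. h (i + p * j))"
proof -
  have "(\<Sum>k<p * m. h k) = (\<Sum>k<m * p. h k)" by (simp add: mult.commute)
  also have "\<dots> = (\<Sum>j<m. \<Sum>k\<in>{j * p..<j * p + p}. h k)" by (rule sum.nat_group[symmetric])
  also have "\<dots> = (\<Sum>j<m. \<Sum>i<p. h (i + p * j))"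
  proof (rule sum.cong[OF refl])
    fix j
    have "(\<Sum>k\<in>{0 + j * p..<p + j * p}. h k) = (\<Sum>i\<in>{0..<p}. h (i + j * p))"
      by (rule sum.shift_bounds_nat_ivl)
    thus "(\<Sum>k\<in>{j * p..<j * p + p}. h k) = (\<Sum>i<p. h (i + p * j))"
      by (simp add: atLeast0LessThan add.commute mult.commute)
  qed
  finally show ?thesis .
qed

lemma add_mult_less_mult: "i < p \<Longrightarrow> j < q \<Longrightarrow> i + p * j < p * (q::nat)"
proof -
  assume "i < p" "j < q"
  hence "i + p * j < p * Suc j" by simp
  also have "\<dots> \<le> p * q" using \<open>j < q\<close> by (intro mult_le_mono2) simp
  finally show ?thesis .
qed

definition contract ::
    "nat \<Rightarrow> nat \<Rightarrow> (nat \<Rightarrow> nat \<Rightarrow> real) \<Rightarrow> (nat \<Rightarrow> nat \<Rightarrow> real) \<Rightarrow> nat \<Rightarrow> nat \<Rightarrow> real" where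
  "contract p q S B i j = (\<Sum>b<q. \<Sum>a<q. B a b * S (i + p * a) (j + p * b))"

text \<open>\<open>rearr_form p q S A B = vec(A)' R(S) vec(B)\<close>, see \<open>bilin_rearr\<close>.\<close>

definition rearr_form ::
    "nat \<Rightarrow> nat \<Rightarrow> (nat \<Rightarrow> nat \<Rightarrow> real) \<Rightarrow> (nat \<Rightarrow> nat \<Rightarrow> real) \<Rightarrow> (nat \<Rightarrow> nat \<Rightarrow> real) \<Rightarrow> real" where
  "rearr_form p q S A B = (\<Sum>j<p. \<Sum>i<p. A i j * contract p q S B i j)"

lemma bilin_rearr:
  assumes "0 < p" "0 < q"
  shows "bilin (p\<^sup>2) (q\<^sup>2) (rearr p q S) u v = rearr_form p q S (unvec p u) (unvec q v)"
proof -
  have "bilin (p\<^sup>2) (q\<^sup>2) (rearr p q S) u v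
      = (\<Sum>j<p. \<Sum>i<p. \<Sum>b<q. \<Sum>a<q. u (i + p * j) * rearr p q S (i + p * j) (a + q * b) * v (a + q * b))"
    unfolding bilin_def power2_eq_square by (simp add: sum_lessThan_mult_split)
  also have "\<dots> = (\<Sum>j<p. \<Sum>i<p. \<Sum>b<q. \<Sum>a<q. u (i + p * j) * (v (a + q * b) * S (i + p * a) (j + p * b)))"
    unfolding rearr_def by (intro sum.cong refl) (simp add: mult_ac add.commute)
  also have "\<dots> = rearr_form p q S (unvec p u) (unvec q v)"
    unfolding rearr_form_def contract_def unvec_def by (simp add: sum_distrib_left)
  finally show ?thesis .
qed

lemma sum_sum_lin_comb:
  "(\<Sum>j<p. \<Sum>i<p'. (\<Sum>c<r. g c i j) * H i j) = (\<Sum>c<r. \<Sum>j<p. \<Sum>i<p'. g c i j * (H i j :: real))"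
proof -
  have "(\<Sum>j<p. \<Sum>i<p'. (\<Sum>c<r. g c i j) * H i j) = (\<Sum>j<p. \<Sum>i<p'. \<Sum>c<r. g c i j * H i j)"
    by (simp add: sum_distrib_right)
  also have "\<dots> = (\<Sum>j<p. \<Sum>c<r. \<Sum>i<p'. g c i j * H i j)" by (intro sum.cong refl) (rule sum.swap)
  also have "\<dots> = (\<Sum>c<r. \<Sum>j<p. \<Sum>i<p'. g c i j * H i j)" by (rule sum.swap)
  finally show ?thesis .
qed

lemma rearr_form_sum_left: "rearr_form p q S (\<lambda>i j. \<Sum>c<r. g c i j) B = (\<Sum>c<r. rearr_form p q S (g c) B)"
  unfolding rearr_form_def by (rule sum_sum_lin_comb)

lemma rearr_form_sum_right: "rearr_form p q S A (\<lambda>a b. \<Sum>c<r. g c a b) = (\<Sum>c<r. rearr_form p q S A (g c))"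
proof -
  have "contract p q S (\<lambda>a b. \<Sum>c<r. g c a b) i j = (\<Sum>c<r. contract p q S (g c) i j)" for i j
    unfolding contract_def by (rule sum_sum_lin_comb)
  hence "rearr_form p q S A (\<lambda>a b. \<Sum>c<r. g c a b) = (\<Sum>j<p. \<Sum>i<p. \<Sum>c<r. A i j * contract p q S (g c) i j)"
    unfolding rearr_form_def by (simp add: sum_distrib_left)
  also have "\<dots> = (\<Sum>j<p. \<Sum>c<r. \<Sum>i<p. A i j * contract p q S (g c) i j)"
    by (intro sum.cong refl) (rule sum.swap)
  also have "\<dots> = (\<Sum>c<r. rearr_form p q S A (g c))" unfolding rearr_form_def by (rule sum.swap)
  finally show ?thesis .
qed

lemma rearr_form_lin_comb:
  "rearr_form p q S (\<lambda>i j. \<Sum>c<r. \<sigma> c * X c i * Y c j) (\<lambda>a b. \<Sum>d<r'. \<tau> d * Z d a * T d b)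
   = (\<Sum>c<r. \<Sum>d<r'. \<sigma> c * \<tau> d * rearr_form p q S (\<lambda>i j. X c i * Y c j) (\<lambda>a b. Z d a * T d b))"
proof -
  have "rearr_form p q S (\<lambda>i j. \<sigma> c * X c i * Y c j) (\<lambda>a b. \<tau> d * Z d a * T d b) =
      \<sigma> c * \<tau> d * rearr_form p q S (\<lambda>i j. X c i * Y c j) (\<lambda>a b. Z d a * T d b)" for c d
    unfolding rearr_form_def contract_def by (simp add: sum_distrib_left mult_ac)
  thus ?thesis unfolding rearr_form_sum_left rearr_form_sum_right by simp
qed

lemma rearr_form_cong:
  assumes "\<And>i j. i < p \<Longrightarrow> j < p \<Longrightarrow> A i j = A' i j" "\<And>a b. a < q \<Longrightarrow> b < q \<Longrightarrow> B a b = B' a b"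
  shows "rearr_form p q S A B = rearr_form p q S A' B'"
  unfolding rearr_form_def contract_def using assms by (intro sum.cong refl) auto

lemma sum4_reorder:
  "(\<Sum>a<q. \<Sum>i<p. \<Sum>b<q. \<Sum>j<p. T a i b j) = (\<Sum>j<p. \<Sum>i<p. \<Sum>b<q. \<Sum>a<q. (T a i b j :: real))"
proof -
  have "(\<Sum>a<q. \<Sum>i<p. \<Sum>b<q. \<Sum>j<p. T a i b j) = (\<Sum>a<q. \<Sum>i<p. \<Sum>j<p. \<Sum>b<q. T a i b j)"
    by (rule sum.cong[OF refl], rule sum.cong[OF refl], rule sum.swap)
  also have "\<dots> = (\<Sum>a<q. \<Sum>j<p. \<Sum>i<p. \<Sum>b<q. T a i b j)"
    by (rule sum.cong[OF refl], rule sum.swap)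
  also have "\<dots> = (\<Sum>j<p. \<Sum>a<q. \<Sum>i<p. \<Sum>b<q. T a i b j)" by (rule sum.swap)
  also have "\<dots> = (\<Sum>j<p. \<Sum>i<p. \<Sum>a<q. \<Sum>b<q. T a i b j)"
    by (rule sum.cong[OF refl], rule sum.swap)
  also have "\<dots> = (\<Sum>j<p. \<Sum>i<p. \<Sum>b<q. \<Sum>a<q. T a i b j)"
    by (rule sum.cong[OF refl], rule sum.cong[OF refl], rule sum.swap)
  finally show ?thesis .
qed

lemma bilin_kron_vec_eq_rearr_form:
  assumes "0 < p"
  shows "bilin (p * q) (p * q) S (\<lambda>m. z (m div p) * x (m mod p)) (\<lambda>m. t (m div p) * y (m mod p))
       = rearr_form p q S (\<lambda>i j. x i * y j) (\<lambda>a b. z a * t b)"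
proof -
  have "bilin (p * q) (p * q) S (\<lambda>m. z (m div p) * x (m mod p)) (\<lambda>m. t (m div p) * y (m mod p))
     = (\<Sum>a<q. \<Sum>i<p. \<Sum>b<q. \<Sum>j<p. z a * x i * S (i + p * a) (j + p * b) * (t b * y j))"
    unfolding bilin_def by (simp add: sum_lessThan_mult_split)
  also have "\<dots> = (\<Sum>j<p. \<Sum>i<p. \<Sum>b<q. \<Sum>a<q. z a * x i * S (i + p * a) (j + p * b) * (t b * y j))"
    by (rule sum4_reorder)
  also have "\<dots> = rearr_form p q S (\<lambda>i j. x i * y j) (\<lambda>a b. z a * t b)"
    unfolding rearr_form_def contract_def by (simp add: sum_distrib_left mult_ac)
  finally show ?thesis .
qed

lemma psd_iff_bilin: "psd n A \<longleftrightarrow> symm n A \<and> (\<forall>x. 0 \<le> bilin n n A x x)"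
  unfolding psd_def bilin_def ..

lemma psd_bilin_le:
  assumes "psd n S"
  shows "2 * bilin n n S x y \<le> bilin n n S x x + bilin n n S y y"
proof -
  have "bilin n n S y x = bilin n n S x y"
    using assms unfolding psd_iff_bilin symm_def bilin_transpose[of n n S y x]
    by (simp add: bilin_def)
  moreover have "0 \<le> bilin n n S (\<lambda>i. x i - y i) (\<lambda>i. x i - y i)"
    using assms unfolding psd_iff_bilin by blast
  moreover have "bilin n n S (\<lambda>i. x i - y i) (\<lambda>i. x i - y i)
      = bilin n n S x x - bilin n n S x y - bilin n n S y x + bilin n n S y y"
    unfolding bilin_def by (simp add: algebra_simps sum_subtractf sum.distrib)
  ultimately show ?thesis by simp
qed

lemma rearr_form_rank_one_le:
  assumes "0 < p" "psd (p * q) S"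
  shows "2 * rearr_form p q S (\<lambda>i j. x i * y j) (\<lambda>a b. z a * t b) \<le>
     rearr_form p q S (\<lambda>i j. x i * x j) (\<lambda>a b. z a * z b) +
     rearr_form p q S (\<lambda>i j. y i * y j) (\<lambda>a b. t a * t b)"
  using psd_bilin_le[OF assms(2), of "\<lambda>m. z (m div p) * x (m mod p)" "\<lambda>m. t (m div p) * y (m mod p)"]
  unfolding bilin_kron_vec_eq_rearr_form[OF assms(1)] .

lemma frob2_cong:
  assumes "\<And>i j. i < m \<Longrightarrow> j < n \<Longrightarrow> A i j = A' i j"
  shows "frob2 m n A = frob2 m n A'"
  unfolding frob2_def using assms by (intro sum.cong refl) auto

lemma psd_cong:
  assumes "\<And>i j. i < n \<Longrightarrow> j < n \<Longrightarrow> A i j = A' i j"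
  shows "psd n A \<longleftrightarrow> psd n A'"
proof -
  have "bilin n n A x x = bilin n n A' x x" for x
    unfolding bilin_def using assms by (intro sum.cong refl) auto
  moreover have "symm n A = symm n A'" unfolding symm_def using assms by auto
  ultimately show ?thesis unfolding psd_iff_bilin by simp
qed

lemma frob2_unvec: "frob2 p p (unvec p x) = vnorm2 (p\<^sup>2) x"
  unfolding vnorm2_def frob2_def unvec_def power2_eq_square[of p] sum_lessThan_mult_split
  by (rule sum.swap)

lemma vnorm2_vec: "vnorm2 (p\<^sup>2) (vec p A) = frob2 p p A"
proof -
  have "vnorm2 (p\<^sup>2) (vec p A) = (\<Sum>j<p. \<Sum>i<p. (vec p A (i + p * j))\<^sup>2)"
    unfolding vnorm2_def power2_eq_square[of p] by (rule sum_lessThan_mult_split)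
  also have "\<dots> = (\<Sum>j<p. \<Sum>i<p. (A i j)\<^sup>2)" unfolding vec_def by (intro sum.cong refl) simp
  finally show ?thesis unfolding frob2_def by (subst sum.swap)
qed

lemma unvec_trunc_vec: "i < p \<Longrightarrow> j < p \<Longrightarrow> unvec p (trunc_vec (p\<^sup>2) (vec p A)) i j = A i j"
  using add_mult_less_mult[of i p j p] unfolding unvec_def trunc_vec_def vec_def
  by (simp add: power2_eq_square)

lemma frob2_orthonormal_sum:
  assumes X: "orthonormal_sys p X r" and Y: "orthonormal_sys p Y r"
  shows "frob2 p p (\<lambda>i j. \<Sum>c<r. \<sigma> c * X c i * Y c j) = (\<Sum>c<r. (\<sigma> c)\<^sup>2)"
proof -
  have "frob2 p p (\<lambda>i j. \<Sum>c<r. \<sigma> c * X c i * Y c j) = (\<Sum>i<p. vnorm2 p (\<lambda>j. \<Sum>c<r. (\<sigma> c * X c i) * Y c j))"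
    unfolding frob2_def vnorm2_def ..
  also have "\<dots> = (\<Sum>i<p. \<Sum>c<r. (\<sigma> c * X c i)\<^sup>2)"
    unfolding vnorm2_lin_comb orthonormal_sys_double_sum[OF Y] by (simp add: power2_eq_square)
  also have "\<dots> = (\<Sum>c<r. (\<sigma> c)\<^sup>2 * vnorm2 p (X c))"
    unfolding vnorm2_def by (subst sum.swap) (simp add: power_mult_distrib sum_distrib_left)
  also have "\<dots> = (\<Sum>c<r. (\<sigma> c)\<^sup>2)"
    using X unfolding orthonormal_sys_def vnorm2_eq_vdot by simp
  finally show ?thesis .
qed

lemma psd_nonneg_sum_rank_one:
  assumes "\<forall>c<r. 0 \<le> \<sigma> c"
  shows "psd p (\<lambda>i j. \<Sum>c<r. \<sigma> c * X c i * X c j)"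
  unfolding psd_iff_bilin symm_def
proof (intro conjI allI impI)
  fix w
  have "bilin p p (\<lambda>i j. \<Sum>c<r. \<sigma> c * X c i * X c j) w w
      = (\<Sum>i<p. \<Sum>j<p. (\<Sum>c<r. \<sigma> c * X c j * X c i) * (w j * w i))"
    unfolding bilin_def by (subst sum.swap) (simp add: mult_ac)
  also have "\<dots> = (\<Sum>c<r. \<Sum>i<p. \<Sum>j<p. \<sigma> c * X c j * X c i * (w j * w i))"
    by (rule sum_sum_lin_comb)
  also have "\<dots> = (\<Sum>c<r. \<sigma> c * (vdot p (X c) w)\<^sup>2)"
    unfolding vdot_def power2_eq_square by (simp add: sum_product sum_distrib_left mult_ac)
  finally have "bilin p p (\<lambda>i j. \<Sum>c<r. \<sigma> c * X c i * X c j) w w = (\<Sum>c<r. \<sigma> c * (vdot p (X c) w)\<^sup>2)" .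
  thus "0 \<le> bilin p p (\<lambda>i j. \<Sum>c<r. \<sigma> c * X c i * X c j) w w"
    using assms by (auto intro!: sum_nonneg)
qed (simp add: mult_ac)

lemma closed_psd_unvec: "closed {u :: nat \<Rightarrow> real. psd p (unvec p u)}"
proof -
  have eq: "{u :: nat \<Rightarrow> real. psd p (unvec p u)} =
     (\<Inter>i<p. \<Inter>j<p. {u. u (i + p * j) = u (j + p * i)}) \<inter>
     (\<Inter>x. {u. 0 \<le> (\<Sum>i<p. \<Sum>j<p. x i * u (i + p * j) * x j)})"
    unfolding psd_def symm_def unvec_def by auto
  have "closed {u :: nat \<Rightarrow> real. u (i + p * j) = u (j + p * i)}" for i j
    by (intro closed_Collect_eq continuous_on_component)
  moreover have "closed {u :: nat \<Rightarrow> real. 0 \<le> (\<Sum>i<p. \<Sum>j<p. x i * u (i + p * j) * x j)}" for x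
    by (intro closed_Collect_le continuous_intros continuous_on_component)
  ultimately show ?thesis unfolding eq by (intro closed_Int closed_INT ballI)
qed

lemma psd_unvec_first_basis_vec:
  assumes "0 < p"
  shows "psd p (unvec p (\<lambda>i. if i = 0 then 1 else 0))"
proof -
  let ?e = "\<lambda>i. if i = 0 then 1 else 0 :: real"
  have "psd p (\<lambda>i j. \<Sum>c<(1::nat). 1 * ?e i * ?e j)"
    by (rule psd_nonneg_sum_rank_one) simp
  moreover have "unvec p ?e i j = (\<Sum>c<(1::nat). 1 * ?e i * ?e j)" if "j < p" for i j
  proof -
    have "i + p * j = 0 \<longleftrightarrow> i = 0 \<and> j = 0" using assms by simp
    thus ?thesis unfolding unvec_def by simp
  qed
  ultimately show ?thesis by (subst psd_cong) auto
qed

lemma rearr_form_le_psd_bound: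
  assumes p: "0 < p" and q: "0 < q" and S: "psd (p * q) S"
    and bound: "\<And>P Q. psd p P \<Longrightarrow> frob2 p p P = 1 \<Longrightarrow> psd q Q \<Longrightarrow> frob2 q q Q = 1 \<Longrightarrow>
                  rearr_form p q S P Q \<le> M"
    and A: "frob2 p p A = 1" and B: "frob2 q q B = 1"
  shows "rearr_form p q S A B \<le> M"
proof -
  obtain r \<sigma> X Y where \<sigma>: "\<forall>c<r. 0 \<le> \<sigma> c" and X: "orthonormal_sys p X r" and Y: "orthonormal_sys p Y r"
    and A_eq: "\<forall>i<p. \<forall>j<p. A i j = (\<Sum>c<r. \<sigma> c * X c i * Y c j)"
    using svd_exists[OF p, of A] by blast
  obtain r' \<tau> Z T where \<tau>: "\<forall>d<r'. 0 \<le> \<tau> d" and Z: "orthonormal_sys q Z r'" and T: "orthonormal_sys q T r'"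
    and B_eq: "\<forall>a<q. \<forall>b<q. B a b = (\<Sum>d<r'. \<tau> d * Z d a * T d b)"
    using svd_exists[OF q, of B] by blast
  have \<sigma>1: "(\<Sum>c<r. (\<sigma> c)\<^sup>2) = 1"
    using A frob2_cong[of p p A] A_eq frob2_orthonormal_sum[OF X Y] by simp
  have \<tau>1: "(\<Sum>d<r'. (\<tau> d)\<^sup>2) = 1"
    using B frob2_cong[of q q B] B_eq frob2_orthonormal_sum[OF Z T] by simp
  let ?F = "\<lambda>X Z c d. rearr_form p q S (\<lambda>i j. X c i * X c j) (\<lambda>a b. Z d a * Z d b)"
  have "rearr_form p q S A B
      = rearr_form p q S (\<lambda>i j. \<Sum>c<r. \<sigma> c * X c i * Y c j) (\<lambda>a b. \<Sum>d<r'. \<tau> d * Z d a * T d b)"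
    using A_eq B_eq by (intro rearr_form_cong) auto
  also have "\<dots> = (\<Sum>c<r. \<Sum>d<r'. \<sigma> c * \<tau> d * rearr_form p q S (\<lambda>i j. X c i * Y c j) (\<lambda>a b. Z d a * T d b))"
    by (rule rearr_form_lin_comb)
  also have "\<dots> \<le> (\<Sum>c<r. \<Sum>d<r'. \<sigma> c * \<tau> d * ((?F X Z c d + ?F Y T c d) / 2))"
  proof (intro sum_mono mult_left_mono)
    fix c d assume "c \<in> {..<r}" "d \<in> {..<r'}"
    thus "0 \<le> \<sigma> c * \<tau> d" using \<sigma> \<tau> by simp
    show "rearr_form p q S (\<lambda>i j. X c i * Y c j) (\<lambda>a b. Z d a * T d b) \<le> (?F X Z c d + ?F Y T c d) / 2"
      using rearr_form_rank_one_le[OF p S, of "X c" "Y c" "Z d" "T d"] by simp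
  qed
  also have "\<dots> = (rearr_form p q S (\<lambda>i j. \<Sum>c<r. \<sigma> c * X c i * X c j) (\<lambda>a b. \<Sum>d<r'. \<tau> d * Z d a * Z d b) +
      rearr_form p q S (\<lambda>i j. \<Sum>c<r. \<sigma> c * Y c i * Y c j) (\<lambda>a b. \<Sum>d<r'. \<tau> d * T d a * T d b)) / 2"
    unfolding rearr_form_lin_comb
    by (simp add: sum.distrib sum_divide_distrib distrib_left add_divide_distrib)
  also have "\<dots> \<le> (M + M) / 2"
  proof -
    have "rearr_form p q S (\<lambda>i j. \<Sum>c<r. \<sigma> c * X c i * X c j) (\<lambda>a b. \<Sum>d<r'. \<tau> d * Z d a * Z d b) \<le> M"
      by (rule bound) (simp_all add: psd_nonneg_sum_rank_one \<sigma> \<tau> frob2_orthonormal_sum X Z \<sigma>1 \<tau>1)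
    moreover have "rearr_form p q S (\<lambda>i j. \<Sum>c<r. \<sigma> c * Y c i * Y c j) (\<lambda>a b. \<Sum>d<r'. \<tau> d * T d a * T d b) \<le> M"
      by (rule bound) (simp_all add: psd_nonneg_sum_rank_one \<sigma> \<tau> frob2_orthonormal_sum Y T \<sigma>1 \<tau>1)
    ultimately show ?thesis by simp
  qed
  finally show ?thesis by simp
qed

lemma trunc_vec_in_psd_unit_sphere:
  assumes "psd p P" "frob2 p p P = 1"
  shows "trunc_vec (p\<^sup>2) (vec p P) \<in> unit_sphere (p\<^sup>2) \<inter> {u. psd p (unvec p u)}"
proof
  show "trunc_vec (p\<^sup>2) (vec p P) \<in> unit_sphere (p\<^sup>2)"
    using assms(2) by (intro trunc_vec_in_unit_sphere) (simp add: vnorm2_vec)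
  have "psd p (unvec p (trunc_vec (p\<^sup>2) (vec p P)))"
    using assms(1) by (subst psd_cong[where A'=P]) (simp_all add: unvec_trunc_vec)
  thus "trunc_vec (p\<^sup>2) (vec p P) \<in> {u. psd p (unvec p u)}" by simp
qed

lemma top_sing_triple_rearr_psd:
  assumes p: "0 < p" and q: "0 < q" and S: "psd (p * q) S"
  shows "\<exists>s u v. top_sing_triple (p\<^sup>2) (q\<^sup>2) (rearr p q S) s u v \<and> psd p (unvec p u) \<and> psd q (unvec q v)"
proof -
  define K1 where "K1 = unit_sphere (p\<^sup>2) \<inter> {u. psd p (unvec p u)}"
  define K2 where "K2 = unit_sphere (q\<^sup>2) \<inter> {v. psd q (unvec q v)}"
  have "compact K1" "compact K2"
    unfolding K1_def K2_def by (intro compact_Int_closed compact_unit_sphere closed_psd_unvec)+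
  moreover have "(\<lambda>i. if i = 0 then 1 else 0) \<in> K1" "(\<lambda>i. if i = 0 then 1 else 0) \<in> K2"
    unfolding K1_def K2_def using first_basis_vec_in_unit_sphere psd_unvec_first_basis_vec p q by simp_all
  hence "K1 \<noteq> {}" "K2 \<noteq> {}" by auto
  ultimately obtain u v where u: "u \<in> K1" and v: "v \<in> K2"
    and max: "\<forall>x\<in>K1. \<forall>y\<in>K2. bilin (p\<^sup>2) (q\<^sup>2) (rearr p q S) x y \<le> bilin (p\<^sup>2) (q\<^sup>2) (rearr p q S) u v"
    using bilin_attains_max[of K1 K2 "p\<^sup>2" "q\<^sup>2" "rearr p q S"] by blast
  let ?M = "bilin (p\<^sup>2) (q\<^sup>2) (rearr p q S) u v"
  have bound: "rearr_form p q S P Q \<le> ?M"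
    if "psd p P" "frob2 p p P = 1" "psd q Q" "frob2 q q Q = 1" for P Q
  proof -
    have "rearr_form p q S P Q
        = bilin (p\<^sup>2) (q\<^sup>2) (rearr p q S) (trunc_vec (p\<^sup>2) (vec p P)) (trunc_vec (q\<^sup>2) (vec q Q))"
      unfolding bilin_rearr[OF p q] by (rule rearr_form_cong; simp only: unvec_trunc_vec)
    also have "\<dots> \<le> ?M"
      using max trunc_vec_in_psd_unit_sphere[OF that(1,2)] trunc_vec_in_psd_unit_sphere[OF that(3,4)]
      unfolding K1_def K2_def by blast
    finally show ?thesis .
  qed
  have "top_sing_triple (p\<^sup>2) (q\<^sup>2) (rearr p q S) ?M u v"
  proof (rule bilin_max_imp_top_sing_triple)
    show "vnorm2 (p\<^sup>2) u = 1" "vnorm2 (q\<^sup>2) v = 1"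
      using u v unfolding K1_def K2_def by (auto simp: unit_sphere_vnorm2)
    fix x y assume xy: "vnorm2 (p\<^sup>2) x = 1" "vnorm2 (q\<^sup>2) y = 1"
    have "rearr_form p q S (unvec p x) (unvec q y) \<le> ?M"
      by (rule rearr_form_le_psd_bound[OF p q S bound]) (use xy in \<open>simp_all add: frob2_unvec\<close>)
    thus "bilin (p\<^sup>2) (q\<^sup>2) (rearr p q S) x y \<le> ?M" by (simp only: bilin_rearr[OF p q])
  qed
  thus ?thesis using u v unfolding K1_def K2_def by blast
qed

lemma psd_scale:
  assumes "0 \<le> c" "psd n A"
  shows "psd n (\<lambda>i j. c * A i j)"
proof -
  have "bilin n n (\<lambda>i j. c * A i j) x x = c * bilin n n A x x" for x
    unfolding bilin_def by (simp add: sum_distrib_left mult_ac)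
  thus ?thesis using assms unfolding psd_iff_bilin symm_def by simp
qed

lemma unvec_scale: "unvec m (\<lambda>k. c * v k) = (\<lambda>i j. c * unvec m v i j)"
  unfolding unvec_def ..

lemma sing_triple_value_nonneg: "top_sing_triple m n R s u v \<Longrightarrow> 0 \<le> s"
  unfolding top_sing_triple_def sing_triple_def by simp

lemma hsvd_psd_exists:
  assumes "0 < d1" "0 < d2" "0 < d3" and Sc: "psd (d1 * d2 * d3) Sc"
  shows "\<exists>Sb1 Sb2 Sb3. hsvd d1 d2 d3 Sc Sb1 Sb2 Sb3 \<and> psd d1 Sb1 \<and> psd d2 Sb2 \<and> psd d3 Sb3"
proof -
  obtain s1 u1 v1 where t1: "top_sing_triple (d1\<^sup>2) ((d2 * d3)\<^sup>2) (rearr d1 (d2 * d3) Sc) s1 u1 v1"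
    and psd1: "psd d1 (unvec d1 u1)" and psd_v1: "psd (d2 * d3) (unvec (d2 * d3) v1)"
    using top_sing_triple_rearr_psd[of d1 "d2 * d3" Sc] assms by (auto simp: mult.assoc)
  have "psd (d2 * d3) (unvec (d2 * d3) (\<lambda>k. s1 * v1 k))"
    unfolding unvec_scale using sing_triple_value_nonneg[OF t1] psd_v1 by (rule psd_scale)
  then obtain \<sigma>1 a1 b1
    where t2: "top_sing_triple (d2\<^sup>2) (d3\<^sup>2) (rearr d2 d3 (unvec (d2 * d3) (\<lambda>k. s1 * v1 k))) \<sigma>1 a1 b1"
    and psd2: "psd d2 (unvec d2 a1)" and psd_b1: "psd d3 (unvec d3 b1)"
    using top_sing_triple_rearr_psd assms(2,3) by blast
  have "psd d3 (unvec d3 (\<lambda>k. \<sigma>1 * b1 k))"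
    unfolding unvec_scale using sing_triple_value_nonneg[OF t2] psd_b1 by (rule psd_scale)
  thus ?thesis unfolding hsvd_def using t1 t2 psd1 psd2 by blast
qed

section \<open>Leading singular triples of near rank-one matrices\<close>

lemma top_sing_triple_near_rank_one_align:
  assumes mn: "0 < m" "0 < n" and \<alpha>: "vnorm2 m \<alpha> = 1" and \<beta>: "vnorm2 n \<beta> = c\<^sup>2" and c: "0 < c"
    and E: "frob2 m n (\<lambda>i j. R i j - \<alpha> i * \<beta> j) \<le> \<delta>\<^sup>2" and \<delta>: "0 \<le> \<delta>"
    and t: "top_sing_triple m n R s u v"
  shows "c * (1 - \<bar>vdot m u \<alpha>\<bar>) \<le> 2 * \<delta>"
proof -
  have st: "sing_triple m n R s u v" using t unfolding top_sing_triple_def by simp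
  have u: "vnorm2 m u = 1" and v: "vnorm2 n v = 1"
    using st unfolding sing_triple_def unit_vec_iff_vnorm2 by auto
  have err: "\<bar>bilin m n (\<lambda>i j. R i j - \<alpha> i * \<beta> j) x y\<bar> \<le> \<delta>" if "vnorm2 m x = 1" "vnorm2 n y = 1" for x y
    using abs_bilin_le[OF E \<delta> that] .
  define w where "w = (\<lambda>j. \<beta> j / c)"
  have w: "vnorm2 n w = 1" and \<beta>w: "vdot n \<beta> w = c"
    using \<beta> c unfolding w_def vnorm2_def vdot_def
    by (simp_all add: power_divide sum_divide_distrib[symmetric] power2_eq_square)
  have "c - \<delta> \<le> bilin m n R \<alpha> w"
    using bilin_split_rank_one[of m n R \<alpha> w \<alpha> \<beta>] err[OF \<alpha> w] \<beta>w
    by (simp add: \<alpha> vnorm2_eq_vdot[symmetric])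
  also have "\<dots> \<le> s" by (rule top_sing_triple_ge_bilin[OF t mn \<alpha> w])
  also have "s \<le> \<delta> + vdot m u \<alpha> * vdot n \<beta> v"
    using bilin_split_rank_one[of m n R u v \<alpha> \<beta>] err[OF u v] sing_triple_value[OF st] by simp
  also have "\<dots> \<le> \<delta> + \<bar>vdot m u \<alpha>\<bar> * c"
  proof -
    have "vdot m u \<alpha> * vdot n \<beta> v \<le> \<bar>vdot m u \<alpha>\<bar> * \<bar>vdot n v \<beta>\<bar>"
      by (simp add: vdot_commute[of n \<beta> v] abs_mult[symmetric])
    also have "\<dots> \<le> \<bar>vdot m u \<alpha>\<bar> * c"
      using abs_vdot_le[OF v \<beta>] c by (intro mult_left_mono) auto
    finally show ?thesis by simp
  qed
  finally show ?thesis by (simp add: algebra_simps)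
qed

lemma top_sing_triple_near_rank_one_right:
  assumes mn: "0 < m" "0 < n" and \<alpha>: "vnorm2 m \<alpha> = 1" and \<beta>: "vnorm2 n \<beta> = c\<^sup>2" and c: "0 < c"
    and E: "frob2 m n (\<lambda>i j. R i j - \<alpha> i * \<beta> j) \<le> \<delta>\<^sup>2" and \<delta>: "0 \<le> \<delta>"
    and t: "top_sing_triple m n R s u v" and sign: "0 \<le> vdot m u \<alpha>"
  shows "vnorm2 n (\<lambda>j. s * v j - \<beta> j) \<le> 2 * \<delta>\<^sup>2 + 4 * c * \<delta>"
proof -
  have st: "sing_triple m n R s u v" using t unfolding top_sing_triple_def by simp
  have u: "vnorm2 m u = 1" and Ru: "\<forall>j<n. (\<Sum>i<m. R i j * u i) = s * v j"
    using st unfolding sing_triple_def unit_vec_iff_vnorm2 by auto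
  define Eu where "Eu = (\<lambda>j. \<Sum>i<m. (R i j - \<alpha> i * \<beta> j) * u i)"
  define t where "t = vdot m u \<alpha> - 1"
  have "s * v j - \<beta> j = Eu j + t * \<beta> j" if "j < n" for j
  proof -
    have "(\<Sum>i<m. R i j * u i) = Eu j + \<beta> j * vdot m u \<alpha>"
      unfolding Eu_def vdot_def by (simp add: algebra_simps sum_subtractf sum_distrib_left)
    thus ?thesis using Ru that unfolding t_def by (simp add: algebra_simps)
  qed
  hence "vnorm2 n (\<lambda>j. s * v j - \<beta> j) = vnorm2 n (\<lambda>j. Eu j + t * \<beta> j)"
    unfolding vnorm2_def by (intro sum.cong) auto
  also have "\<dots> \<le> 2 * vnorm2 n Eu + 2 * (t\<^sup>2 * c\<^sup>2)"
    using vnorm2_add_le[of n Eu "\<lambda>j. t * \<beta> j"] by (simp add: vnorm2_scale \<beta>)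
  also have "\<dots> \<le> 2 * \<delta>\<^sup>2 + 4 * c * \<delta>"
  proof -
    have "vnorm2 n Eu \<le> \<delta>\<^sup>2"
      using vnorm2_transpose_apply_le[where R="\<lambda>i j. R i j - \<alpha> i * \<beta> j" and x=u and m=m and n=n] E u
      unfolding Eu_def by simp
    moreover have "c * (1 - vdot m u \<alpha>) \<le> 2 * \<delta>"
      using top_sing_triple_near_rank_one_align[OF assms(1-8)] sign by simp
    moreover have "vdot m u \<alpha> \<le> 1" using abs_vdot_le[of m u \<alpha> 1] u \<alpha> by simp
    ultimately have "- t \<le> 2 * \<delta> / c" "0 \<le> - t" "- t \<le> 1"
      using c sign unfolding t_def by (simp_all add: field_simps)
    have "t\<^sup>2 \<le> - t"
      using mult_left_mono[OF \<open>- t \<le> 1\<close> \<open>0 \<le> - t\<close>] by (simp add: power2_eq_square)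
    hence "t\<^sup>2 * c\<^sup>2 \<le> 2 * \<delta> / c * c\<^sup>2"
      using \<open>- t \<le> 2 * \<delta> / c\<close> by (intro mult_right_mono) auto
    also have "\<dots> = 2 * c * \<delta>" using c by (simp add: power2_eq_square)
    finally show ?thesis using \<open>vnorm2 n Eu \<le> \<delta>\<^sup>2\<close> by simp
  qed
  finally show ?thesis .
qed

lemma frob2_rearr:
  assumes "0 < p" "0 < q"
  shows "frob2 (p\<^sup>2) (q\<^sup>2) (rearr p q M) = frob2 (p * q) (p * q) M"
proof -
  have "frob2 (p\<^sup>2) (q\<^sup>2) (rearr p q M)
      = (\<Sum>j<p. \<Sum>i<p. \<Sum>b<q. \<Sum>a<q. (rearr p q M (i + p * j) (a + q * b))\<^sup>2)"
    unfolding frob2_def power2_eq_square[of p] power2_eq_square[of q] by (simp add: sum_lessThan_mult_split)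
  also have "\<dots> = (\<Sum>j<p. \<Sum>i<p. \<Sum>b<q. \<Sum>a<q. (M (i + p * a) (j + p * b))\<^sup>2)"
    unfolding rearr_def by (intro sum.cong refl) (simp add: mult_ac add.commute)
  also have "\<dots> = (\<Sum>a<q. \<Sum>i<p. \<Sum>b<q. \<Sum>j<p. (M (i + p * a) (j + p * b))\<^sup>2)"
    by (rule sum4_reorder[symmetric])
  also have "\<dots> = frob2 (p * q) (p * q) M"
    unfolding frob2_def by (simp add: sum_lessThan_mult_split)
  finally show ?thesis .
qed

lemma frob2_rearr_mdiff_kron:
  assumes "0 < p" "0 < q"
  shows "frob2 (p\<^sup>2) (q\<^sup>2) (\<lambda>k l. rearr p q S k l - vec p A k * vec q B l)
       = frob2 (p * q) (p * q) (mdiff S (kron p B A))"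
proof -
  have "frob2 (p\<^sup>2) (q\<^sup>2) (\<lambda>k l. rearr p q S k l - vec p A k * vec q B l)
      = frob2 (p\<^sup>2) (q\<^sup>2) (rearr p q (mdiff S (kron p B A)))"
    using rearr_kron[OF assms] by (intro frob2_cong) (simp add: rearr_def mdiff_def)
  thus ?thesis unfolding frob2_rearr[OF assms] .
qed

lemma frob2_mdiff_unvec: "frob2 p p (mdiff (unvec p x) A) = vnorm2 (p\<^sup>2) (\<lambda>k. x k - vec p A k)"
proof -
  have "frob2 p p (mdiff (unvec p x) A) = frob2 p p (unvec p (\<lambda>k. x k - vec p A k))"
    by (rule frob2_cong) (simp add: mdiff_def unvec_def vec_def)
  thus ?thesis unfolding frob2_unvec .
qed

lemma psd_diag_nonneg:
  assumes "psd n A" "i < n"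
  shows "0 \<le> A i i"
proof -
  have "0 \<le> bilin n n A (\<lambda>j. if j = i then 1 else 0) (\<lambda>j. if j = i then 1 else 0)"
    using assms(1) unfolding psd_iff_bilin by blast
  thus ?thesis unfolding bilin_basis_vec[OF assms(2) assms(2)] .
qed

lemma pd_diag_pos:
  assumes "pd n A" "i < n"
  shows "0 < A i i"
proof -
  have "0 < bilin n n A (\<lambda>j. if j = i then 1 else 0) (\<lambda>j. if j = i then 1 else 0)"
    using assms unfolding pd_def bilin_def by (auto dest!: spec[of _ "\<lambda>j. if j = i then 1 else 0"])
  thus ?thesis unfolding bilin_basis_vec[OF assms(2) assms(2)] .
qed

text \<open>The sign of \<open>u\<close> is forced: \<open>u 0 \<ge> 0\<close> as \<open>unvec p u\<close> is PSD, while \<open>A 0 0 > 0\<close>, so \<open>u\<close>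
  cannot be close to \<open>-vec p A\<close>.\<close>

lemma top_sing_triple_rearr_near_kron:
  assumes p: "0 < p" and q: "0 < q" and A: "frob2 p p A = 1" "0 < A 0 0"
    and c: "0 < c" "frob2 q q B = c\<^sup>2"
    and close: "frob2 (p * q) (p * q) (mdiff S (kron p B A)) \<le> \<delta>\<^sup>2" and \<delta>: "0 \<le> \<delta>"
    and small: "4 * \<delta> / c < (A 0 0)\<^sup>2"
    and t: "top_sing_triple (p\<^sup>2) (q\<^sup>2) (rearr p q S) s u v" and psd: "psd p (unvec p u)"
  shows "frob2 p p (mdiff (unvec p u) A) \<le> 4 * \<delta> / c"
    and "frob2 q q (mdiff (unvec q (\<lambda>k. s * v k)) B) \<le> 2 * \<delta>\<^sup>2 + 4 * c * \<delta>"
proof -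
  let ?\<alpha> = "vec p A" and ?\<beta> = "vec q B"
  have pq: "0 < p\<^sup>2" "0 < q\<^sup>2" using p q by simp_all
  have \<alpha>: "vnorm2 (p\<^sup>2) ?\<alpha> = 1" and \<beta>: "vnorm2 (q\<^sup>2) ?\<beta> = c\<^sup>2"
    using A c by (simp_all add: vnorm2_vec)
  have E: "frob2 (p\<^sup>2) (q\<^sup>2) (\<lambda>k l. rearr p q S k l - ?\<alpha> k * ?\<beta> l) \<le> \<delta>\<^sup>2"
    using close unfolding frob2_rearr_mdiff_kron[OF p q] .
  note near = pq \<alpha> \<beta> c(1) E \<delta> t
  have u: "vnorm2 (p\<^sup>2) u = 1"
    using t unfolding top_sing_triple_def sing_triple_def unit_vec_iff_vnorm2 by simp
  have align: "c * (1 - \<bar>vdot (p\<^sup>2) u ?\<alpha>\<bar>) \<le> 2 * \<delta>"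
    by (rule top_sing_triple_near_rank_one_align[OF near])
  have sign: "0 \<le> vdot (p\<^sup>2) u ?\<alpha>"
  proof (rule ccontr)
    assume neg: "\<not> 0 \<le> vdot (p\<^sup>2) u ?\<alpha>"
    have "(A 0 0)\<^sup>2 \<le> (u 0 + ?\<alpha> 0)\<^sup>2"
      using psd_diag_nonneg[OF psd p] A(2) by (intro power_mono) (simp_all add: unvec_def vec_def)
    also have "\<dots> \<le> vnorm2 (p\<^sup>2) (\<lambda>k. u k + ?\<alpha> k)" by (rule vnorm2_component_le[OF pq(1)])
    also have "\<dots> = 2 * (1 - \<bar>vdot (p\<^sup>2) u ?\<alpha>\<bar>)" using neg by (simp add: vnorm2_add u \<alpha>)
    also have "\<dots> \<le> 4 * \<delta> / c" using align c by (simp add: field_simps)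
    finally show False using small by simp
  qed
  have "vnorm2 (p\<^sup>2) (\<lambda>k. u k - ?\<alpha> k) = 2 * (1 - \<bar>vdot (p\<^sup>2) u ?\<alpha>\<bar>)"
    using sign by (simp add: vnorm2_diff u \<alpha>)
  also have "\<dots> \<le> 4 * \<delta> / c" using align c by (simp add: field_simps)
  finally show "frob2 p p (mdiff (unvec p u) A) \<le> 4 * \<delta> / c" unfolding frob2_mdiff_unvec .
  show "frob2 q q (mdiff (unvec q (\<lambda>k. s * v k)) B) \<le> 2 * \<delta>\<^sup>2 + 4 * c * \<delta>"
    unfolding frob2_mdiff_unvec by (rule top_sing_triple_near_rank_one_right[OF near sign])
qed

lemma frob2_pos:
  assumes "0 < n" "A 0 0 \<noteq> 0"
  shows "0 < frob2 n n A"
proof -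
  have "(A 0 0)\<^sup>2 \<le> frob2 n n A"
    using vnorm2_component_le[of 0 "n\<^sup>2" "vec n A"] assms(1) unfolding vnorm2_vec by (simp add: vec_def)
  moreover have "0 < (A 0 0)\<^sup>2" using assms(2) by simp
  ultimately show ?thesis by linarith
qed

lemma frob_le_of_frob2_le: "frob2 n n A \<le> \<epsilon>\<^sup>2 \<Longrightarrow> 0 \<le> \<epsilon> \<Longrightarrow> frob n A \<le> \<epsilon>"
  unfolding frob_eq_sqrt_frob2 using real_sqrt_le_mono[of "frob2 n n A" "\<epsilon>\<^sup>2"] by simp

lemma frob2_le_of_frob_le: "frob n A \<le> \<delta> \<Longrightarrow> frob2 n n A \<le> \<delta>\<^sup>2"
  unfolding frob_eq_sqrt_frob2 by (rule sqrt_le_D)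

lemma hsvd_near_kron_bounds:
  assumes d: "0 < d1" "0 < d2" "0 < d3" and pos: "0 < \<Sigma>1 0 0" "0 < \<Sigma>2 0 0"
    and f: "frob2 d1 d1 \<Sigma>1 = 1" "frob2 d2 d2 \<Sigma>2 = 1"
    and c1: "0 < c1" "frob2 (d2 * d3) (d2 * d3) (kron d2 \<Sigma>3 \<Sigma>2) = c1\<^sup>2"
    and c2: "0 < c2" "frob2 d3 d3 \<Sigma>3 = c2\<^sup>2"
    and \<delta>: "0 \<le> \<delta>" and D: "D = sqrt (2 * \<delta>\<^sup>2 + 4 * c1 * \<delta>)"
    and small: "4 * \<delta> / c1 < (\<Sigma>1 0 0)\<^sup>2" "4 * D / c2 < (\<Sigma>2 0 0)\<^sup>2"
    and close: "frob2 (d1 * d2 * d3) (d1 * d2 * d3) (mdiff Sc (kron d1 (kron d2 \<Sigma>3 \<Sigma>2) \<Sigma>1)) \<le> \<delta>\<^sup>2"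
    and hsvd: "hsvd d1 d2 d3 Sc Sb1 Sb2 Sb3" and psd: "psd d1 Sb1" "psd d2 Sb2"
  shows "frob2 d1 d1 (mdiff Sb1 \<Sigma>1) \<le> 4 * \<delta> / c1"
    and "frob2 d2 d2 (mdiff Sb2 \<Sigma>2) \<le> 4 * D / c2"
    and "frob2 d3 d3 (mdiff Sb3 \<Sigma>3) \<le> 2 * D\<^sup>2 + 4 * c2 * D"
proof -
  obtain s1 u1 v1 \<sigma>1 a1 b1 where
    t1: "top_sing_triple (d1\<^sup>2) ((d2 * d3)\<^sup>2) (rearr d1 (d2 * d3) Sc) s1 u1 v1" and
    Sb1: "Sb1 = unvec d1 u1" and
    t2: "top_sing_triple (d2\<^sup>2) (d3\<^sup>2) (rearr d2 d3 (unvec (d2 * d3) (\<lambda>k. s1 * v1 k))) \<sigma>1 a1 b1" and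
    Sb2: "Sb2 = unvec d2 a1" and Sb3: "Sb3 = unvec d3 (\<lambda>k. \<sigma>1 * b1 k)"
    using hsvd unfolding hsvd_def by blast
  have d23: "0 < d2 * d3" using d by simp
  note stage1 = top_sing_triple_rearr_near_kron[OF d(1) d23 f(1) pos(1) c1 close[unfolded mult.assoc] \<delta>
      small(1) t1 psd(1)[unfolded Sb1]]
  have D': "0 \<le> D" "D\<^sup>2 = 2 * \<delta>\<^sup>2 + 4 * c1 * \<delta>" unfolding D using \<delta> c1(1) by simp_all
  note stage2 = top_sing_triple_rearr_near_kron[OF d(2) d(3) f(2) pos(2) c2 stage1(2)[folded D'(2)] D'(1)
      small(2) t2 psd(2)[unfolded Sb2]]
  show "frob2 d1 d1 (mdiff Sb1 \<Sigma>1) \<le> 4 * \<delta> / c1" unfolding Sb1 by (rule stage1(1))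
  show "frob2 d2 d2 (mdiff Sb2 \<Sigma>2) \<le> 4 * D / c2" unfolding Sb2 by (rule stage2(1))
  show "frob2 d3 d3 (mdiff Sb3 \<Sigma>3) \<le> 2 * D\<^sup>2 + 4 * c2 * D" unfolding Sb3 by (rule stage2(2))
qed

lemma hsvd_near_kron:
  assumes d: "0 < d1" "0 < d2" "0 < d3" and pd: "pd d1 \<Sigma>1" "pd d2 \<Sigma>2" "pd d3 \<Sigma>3"
    and f: "frob d1 \<Sigma>1 = 1" "frob d2 \<Sigma>2 = 1" and \<epsilon>: "0 < \<epsilon>"
  shows "\<exists>\<delta>>0. \<forall>Sc Sb1 Sb2 Sb3.
     frob (d1 * d2 * d3) (mdiff Sc (kron d1 (kron d2 \<Sigma>3 \<Sigma>2) \<Sigma>1)) \<le> \<delta> \<longrightarrow>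
     hsvd d1 d2 d3 Sc Sb1 Sb2 Sb3 \<longrightarrow> psd d1 Sb1 \<longrightarrow> psd d2 Sb2 \<longrightarrow>
     frob d1 (mdiff Sb1 \<Sigma>1) \<le> \<epsilon> \<and> frob d2 (mdiff Sb2 \<Sigma>2) \<le> \<epsilon> \<and> frob d3 (mdiff Sb3 \<Sigma>3) \<le> \<epsilon>"
proof -
  define c1 where "c1 = sqrt (frob2 (d2 * d3) (d2 * d3) (kron d2 \<Sigma>3 \<Sigma>2))"
  define c2 where "c2 = sqrt (frob2 d3 d3 \<Sigma>3)"
  have pos: "0 < \<Sigma>1 0 0" "0 < \<Sigma>2 0 0" "0 < \<Sigma>3 0 0" using pd_diag_pos pd d by blast+
  have "0 < frob2 (d2 * d3) (d2 * d3) (kron d2 \<Sigma>3 \<Sigma>2)"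
    using pos d by (intro frob2_pos) (simp_all add: kron_def)
  hence c1: "0 < c1" "frob2 (d2 * d3) (d2 * d3) (kron d2 \<Sigma>3 \<Sigma>2) = c1\<^sup>2" unfolding c1_def by simp_all
  have "0 < frob2 d3 d3 \<Sigma>3" using pos(3) d(3) by (intro frob2_pos) simp_all
  hence c2: "0 < c2" "frob2 d3 d3 \<Sigma>3 = c2\<^sup>2" unfolding c2_def by simp_all
  have f2: "frob2 d1 d1 \<Sigma>1 = 1" "frob2 d2 d2 \<Sigma>2 = 1" using f by (simp_all add: frob_eq_sqrt_frob2)
  define D where "D = (\<lambda>\<delta>::real. sqrt (2 * \<delta>\<^sup>2 + 4 * c1 * \<delta>))"
  have "(D \<longlongrightarrow> 0) (at_right 0)" unfolding D_def by (auto intro!: tendsto_eq_intros)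
  hence "((\<lambda>\<delta>. 4 * \<delta> / c1) \<longlongrightarrow> 0) (at_right 0)" "((\<lambda>\<delta>. 4 * D \<delta> / c2) \<longlongrightarrow> 0) (at_right 0)"
    "((\<lambda>\<delta>. 2 * (D \<delta>)\<^sup>2 + 4 * c2 * D \<delta>) \<longlongrightarrow> 0) (at_right 0)"
    using c1(1) c2(1) by (auto intro!: tendsto_eq_intros)
  hence "\<forall>\<^sub>F \<delta> in at_right 0. 0 < \<delta> \<and> 4 * \<delta> / c1 < (\<Sigma>1 0 0)\<^sup>2 \<and> 4 * \<delta> / c1 < \<epsilon>\<^sup>2 \<and>
      4 * D \<delta> / c2 < (\<Sigma>2 0 0)\<^sup>2 \<and> 4 * D \<delta> / c2 < \<epsilon>\<^sup>2 \<and> 2 * (D \<delta>)\<^sup>2 + 4 * c2 * D \<delta> < \<epsilon>\<^sup>2"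
    using pos \<epsilon> by (intro eventually_conj eventually_at_right_less order_tendstoD(2)) auto
  then obtain \<delta> where \<delta>: "0 < \<delta>" "4 * \<delta> / c1 < (\<Sigma>1 0 0)\<^sup>2" "4 * \<delta> / c1 < \<epsilon>\<^sup>2"
      "4 * D \<delta> / c2 < (\<Sigma>2 0 0)\<^sup>2" "4 * D \<delta> / c2 < \<epsilon>\<^sup>2" "2 * (D \<delta>)\<^sup>2 + 4 * c2 * D \<delta> < \<epsilon>\<^sup>2"
    using eventually_happens[of _ "at_right (0::real)"] by (auto simp: trivial_limit_at_right_real)
  show ?thesis
  proof (intro exI[of _ \<delta>] conjI allI impI \<delta>(1))
    fix Sc Sb1 Sb2 Sb3
    assume "frob (d1 * d2 * d3) (mdiff Sc (kron d1 (kron d2 \<Sigma>3 \<Sigma>2) \<Sigma>1)) \<le> \<delta>"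
      and "hsvd d1 d2 d3 Sc Sb1 Sb2 Sb3" "psd d1 Sb1" "psd d2 Sb2"
    note bounds = hsvd_near_kron_bounds[OF d pos(1,2) f2 c1 c2 less_imp_le[OF \<delta>(1)] D_def[THEN fun_cong]
        \<delta>(2,4) frob2_le_of_frob_le[OF this(1)] this(2-4)]
    show "frob d1 (mdiff Sb1 \<Sigma>1) \<le> \<epsilon>" "frob d2 (mdiff Sb2 \<Sigma>2) \<le> \<epsilon>" "frob d3 (mdiff Sb3 \<Sigma>3) \<le> \<epsilon>"
      using bounds \<delta>(3,5,6) \<epsilon> by (auto intro: frob_le_of_frob2_le)
  qed
qed

section \<open>Consistency\<close>

lemma o_p1_transfer:
  assumes M: "prob_space M" and X: "o_p1 M X" and X_meas: "\<And>T. X T \<in> borel_measurable M"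
    and Y_nonneg: "\<And>T \<omega>. 0 \<le> Y T \<omega>"
    and cont: "\<And>\<epsilon>. 0 < \<epsilon> \<Longrightarrow> \<exists>\<delta>>0. \<forall>T. \<forall>\<omega>\<in>space M. X T \<omega> \<le> \<delta> \<longrightarrow> Y T \<omega> \<le> \<epsilon>"
  shows "o_p1 M Y"
  unfolding o_p1_def
proof (intro allI impI)
  interpret prob_space M by (rule M)
  fix \<epsilon> :: real assume "0 < \<epsilon>"
  then obtain \<delta> where "0 < \<delta>" and imp: "\<forall>T. \<forall>\<omega>\<in>space M. X T \<omega> \<le> \<delta> \<longrightarrow> Y T \<omega> \<le> \<epsilon>"
    using cont by blast
  have "{\<omega> \<in> space M. \<epsilon> < \<bar>Y T \<omega>\<bar>} \<subseteq> {\<omega> \<in> space M. \<delta> < \<bar>X T \<omega>\<bar>}" for T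
  proof
    fix \<omega> assume "\<omega> \<in> {\<omega> \<in> space M. \<epsilon> < \<bar>Y T \<omega>\<bar>}"
    hence \<omega>: "\<omega> \<in> space M" "\<epsilon> < Y T \<omega>" using Y_nonneg[of T \<omega>] by auto
    hence "\<not> X T \<omega> \<le> \<delta>" using imp[rule_format, OF \<omega>(1)] by (meson not_le)
    thus "\<omega> \<in> {\<omega> \<in> space M. \<delta> < \<bar>X T \<omega>\<bar>}" using \<omega>(1) by auto
  qed
  moreover have "{\<omega> \<in> space M. \<delta> < \<bar>X T \<omega>\<bar>} \<in> sets M" for T
    using X_meas[of T] by measurable
  ultimately have mono:
      "measure M {\<omega> \<in> space M. \<epsilon> < \<bar>Y T \<omega>\<bar>} \<le> measure M {\<omega> \<in> space M. \<delta> < \<bar>X T \<omega>\<bar>}" for T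
    by (rule finite_measure_mono)
  have lim: "((\<lambda>T. measure M {\<omega> \<in> space M. \<delta> < \<bar>X T \<omega>\<bar>}) \<longlongrightarrow> 0) sequentially"
    using X \<open>0 < \<delta>\<close> unfolding o_p1_def by blast
  show "((\<lambda>T. measure M {\<omega> \<in> space M. \<epsilon> < \<bar>Y T \<omega>\<bar>}) \<longlongrightarrow> 0) sequentially"
    by (rule tendsto_sandwich[OF _ _ tendsto_const lim]) (simp_all add: mono)
qed

lemma borel_measurable_frob_mdiff:
  assumes "\<And>i j. i < n \<Longrightarrow> j < n \<Longrightarrow> (\<lambda>\<omega>. S \<omega> i j) \<in> borel_measurable M"
  shows "(\<lambda>\<omega>. frob n (mdiff (S \<omega>) A)) \<in> borel_measurable M"
  unfolding frob_def mdiff_def using assms by measurable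

lemma frob_nonneg: "0 \<le> frob n A"
  unfolding frob_eq_sqrt_frob2 using frob2_nonneg by simp

lemma hsvd_consistent:
  assumes d: "0 < d1" "0 < d2" "0 < d3" and M: "prob_space M"
    and pd: "pd d1 \<Sigma>1" "pd d2 \<Sigma>2" "pd d3 \<Sigma>3" and f: "frob d1 \<Sigma>1 = 1" "frob d2 \<Sigma>2 = 1"
    and Sc_meas: "\<And>T i j. i < d1 * d2 * d3 \<Longrightarrow> j < d1 * d2 * d3 \<Longrightarrow> (\<lambda>\<omega>. Sc T \<omega> i j) \<in> borel_measurable M"
    and consistent: "o_p1 M (\<lambda>T \<omega>. frob (d1 * d2 * d3) (mdiff (Sc T \<omega>) (kron d1 (kron d2 \<Sigma>3 \<Sigma>2) \<Sigma>1)))"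
    and Sb: "\<forall>T. \<forall>\<omega>\<in>space M. hsvd d1 d2 d3 (Sc T \<omega>) (Sb1 T \<omega>) (Sb2 T \<omega>) (Sb3 T \<omega>) \<and>
               psd d1 (Sb1 T \<omega>) \<and> psd d2 (Sb2 T \<omega>) \<and> psd d3 (Sb3 T \<omega>)"
  shows "o_p1 M (\<lambda>T \<omega>. frob d1 (mdiff (Sb1 T \<omega>) \<Sigma>1))"
    and "o_p1 M (\<lambda>T \<omega>. frob d2 (mdiff (Sb2 T \<omega>) \<Sigma>2))"
    and "o_p1 M (\<lambda>T \<omega>. frob d3 (mdiff (Sb3 T \<omega>) \<Sigma>3))"
proof -
  have "(\<lambda>\<omega>. frob (d1 * d2 * d3) (mdiff (Sc T \<omega>) (kron d1 (kron d2 \<Sigma>3 \<Sigma>2) \<Sigma>1))) \<in> borel_measurable M" for T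
    using Sc_meas by (rule borel_measurable_frob_mdiff)
  note transfer = o_p1_transfer[OF M consistent this]
  have cont: "\<exists>\<delta>>0. \<forall>T. \<forall>\<omega>\<in>space M.
      frob (d1 * d2 * d3) (mdiff (Sc T \<omega>) (kron d1 (kron d2 \<Sigma>3 \<Sigma>2) \<Sigma>1)) \<le> \<delta> \<longrightarrow>
      frob d1 (mdiff (Sb1 T \<omega>) \<Sigma>1) \<le> \<epsilon> \<and> frob d2 (mdiff (Sb2 T \<omega>) \<Sigma>2) \<le> \<epsilon> \<and>
      frob d3 (mdiff (Sb3 T \<omega>) \<Sigma>3) \<le> \<epsilon>" if \<epsilon>: "0 < \<epsilon>" for \<epsilon>
  proof -
    obtain \<delta> where "0 < \<delta>" and near: "\<forall>Sc Sb1 Sb2 Sb3.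
        frob (d1 * d2 * d3) (mdiff Sc (kron d1 (kron d2 \<Sigma>3 \<Sigma>2) \<Sigma>1)) \<le> \<delta> \<longrightarrow>
        hsvd d1 d2 d3 Sc Sb1 Sb2 Sb3 \<longrightarrow> psd d1 Sb1 \<longrightarrow> psd d2 Sb2 \<longrightarrow>
        frob d1 (mdiff Sb1 \<Sigma>1) \<le> \<epsilon> \<and> frob d2 (mdiff Sb2 \<Sigma>2) \<le> \<epsilon> \<and> frob d3 (mdiff Sb3 \<Sigma>3) \<le> \<epsilon>"
      using hsvd_near_kron[OF d pd f \<epsilon>] by blast
    show ?thesis using \<open>0 < \<delta>\<close> near Sb by blast
  qed
  show "o_p1 M (\<lambda>T \<omega>. frob d1 (mdiff (Sb1 T \<omega>) \<Sigma>1))"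
    by (rule transfer, rule frob_nonneg, drule cont, blast)
  show "o_p1 M (\<lambda>T \<omega>. frob d2 (mdiff (Sb2 T \<omega>) \<Sigma>2))"
    by (rule transfer, rule frob_nonneg, drule cont, blast)
  show "o_p1 M (\<lambda>T \<omega>. frob d3 (mdiff (Sb3 T \<omega>) \<Sigma>3))"
    by (rule transfer, rule frob_nonneg, drule cont, blast)
qed

theorem proposition2:
  fixes d1 d2 d3 :: nat
  assumes dims: "1 \<le> d1" "1 \<le> d2" "1 \<le> d3"
  shows
    "(\<forall>Sc. psd (d1*d2*d3) Sc \<longrightarrow>
        (\<exists>Sb1 Sb2 Sb3. hsvd d1 d2 d3 Sc Sb1 Sb2 Sb3 \<and>
                       psd d1 Sb1 \<and> psd d2 Sb2 \<and> psd d3 Sb3))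
     \<and>
     (\<forall>(M :: 'a measure) \<Sigma>1 \<Sigma>2 \<Sigma>3
         (Sc :: nat \<Rightarrow> 'a \<Rightarrow> nat \<Rightarrow> nat \<Rightarrow> real)
         (Sb1 :: nat \<Rightarrow> 'a \<Rightarrow> nat \<Rightarrow> nat \<Rightarrow> real) Sb2 Sb3.
        prob_space M \<longrightarrow>
        pd d1 \<Sigma>1 \<longrightarrow> pd d2 \<Sigma>2 \<longrightarrow> pd d3 \<Sigma>3 \<longrightarrow>
        frob d1 \<Sigma>1 = 1 \<longrightarrow> frob d2 \<Sigma>2 = 1 \<longrightarrow>
        (\<forall>T i j. i < d1*d2*d3 \<longrightarrow> j < d1*d2*d3 \<longrightarrow>
            (\<lambda>\<omega>. Sc T \<omega> i j) \<in> borel_measurable M) \<longrightarrow>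
        (\<forall>T. \<forall>\<omega>\<in>space M. psd (d1*d2*d3) (Sc T \<omega>)) \<longrightarrow>
        o_p1 M (\<lambda>T \<omega>. frob (d1*d2*d3)
                   (mdiff (Sc T \<omega>) (kron d1 (kron d2 \<Sigma>3 \<Sigma>2) \<Sigma>1))) \<longrightarrow>
        (\<forall>T. \<forall>\<omega>\<in>space M.
            hsvd d1 d2 d3 (Sc T \<omega>) (Sb1 T \<omega>) (Sb2 T \<omega>) (Sb3 T \<omega>) \<and>
            psd d1 (Sb1 T \<omega>) \<and> psd d2 (Sb2 T \<omega>) \<and> psd d3 (Sb3 T \<omega>)) \<longrightarrow>
        (\<forall>T i j. i < d1 \<longrightarrow> j < d1 \<longrightarrow> (\<lambda>\<omega>. Sb1 T \<omega> i j) \<in> borel_measurable M) \<longrightarrow>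
        (\<forall>T i j. i < d2 \<longrightarrow> j < d2 \<longrightarrow> (\<lambda>\<omega>. Sb2 T \<omega> i j) \<in> borel_measurable M) \<longrightarrow>
        (\<forall>T i j. i < d3 \<longrightarrow> j < d3 \<longrightarrow> (\<lambda>\<omega>. Sb3 T \<omega> i j) \<in> borel_measurable M) \<longrightarrow>
        o_p1 M (\<lambda>T \<omega>. frob d1 (mdiff (Sb1 T \<omega>) \<Sigma>1)) \<and>
        o_p1 M (\<lambda>T \<omega>. frob d2 (mdiff (Sb2 T \<omega>) \<Sigma>2)) \<and>
        o_p1 M (\<lambda>T \<omega>. frob d3 (mdiff (Sb3 T \<omega>) \<Sigma>3)))"
proof (intro conjI allI impI)
  show "\<exists>Sb1 Sb2 Sb3. hsvd d1 d2 d3 Sc Sb1 Sb2 Sb3 \<and> psd d1 Sb1 \<and> psd d2 Sb2 \<and> psd d3 Sb3"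
    if "psd (d1 * d2 * d3) Sc" for Sc
    using hsvd_psd_exists that dims by simp
qed (rule hsvd_consistent; use dims in \<open>auto simp: Suc_le_eq\<close>)+

end
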